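(* Let $p\ge 3$ be an integer and let $\lambda\ge 0$. For each $n\ge 1$, let $\theta_0\in\mathbb S^{n-1}$, let $Z$ be a random $p$-tensor in $(\mathbb R^n)^{\otimes p}$ with i.i.d. $\mathcal N(0,1)$ entries, and set $Y=\lambda\sqrt n\,\theta_0^{\otimes p}+Z$. Let $\Pi$ be the uniform probability measure on $\mathbb S^{n-1}$ and let the posterior be $d\Pi(\theta\mid Y)=\mathcal Z_Y^{-1}\exp\big(\tfrac12\sqrt n\lambda\langle\theta^{\otimes p},Y\rangle\big)\,d\Pi(\theta)$ with $\mathcal Z_Y$ the normalising constant. For $0\le s<t\le 1$ define the sets $\mathcal S_s$ and $\mathcal T_t$ as in the context. Then for any $K>0$ there exist $\lambda_0>0$ and functions $s(\lambda),t(\lambda)\in[0,1)$ with $s(\lambda)<t(\lambda)$ and $s(\lambda),t(\lambda)\to 1$ as $\lambda\to\infty$, such that for all $\lambda\ge\lambda_0$, \[\limsup_{n\to\infty}\frac1n\log\frac{\Pi(\mathcal S_{s(\lambda)}\mid Y)}{\Pi(\mathcal T_{t(\lambda)}\mid Y)}\le -K\quad\text{almost surely.}\]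
   Context: $\mathbb S^{n-1}=\{\theta\in\mathbb R^n:\|\theta\|_2=1\}$; $\theta^{\otimes p}$ is the $p$-fold tensor product and $\langle\cdot,\cdot\rangle$ the Euclidean inner product on $\mathbb R^{n^p}$. If $p$ is even: $\mathcal S_s=\{\theta\in\mathbb S^{n-1}:|\langle\theta,\theta_0\rangle|\le s\}$ and $\mathcal T_t=\{\theta\in\mathbb S^{n-1}:|\langle\theta,\theta_0\rangle|>t\}$. If $p$ is odd, the same definitions with $|\langle\theta,\theta_0\rangle|$ replaced by $\langle\theta,\theta_0\rangle$. *)

theory Defs
  imports "HOL-Probability.Probability"
begin

text \<open>Vectors in R^n are represented as extensional functions nat => real on the
  index set {..<n} (elements of PiE {..<n} (%_. UNIV)); the ambient measurable space
  is the product Borel space PiM {..<n} (%_. lborel).\<close>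

definition Rn :: "nat \<Rightarrow> (nat \<Rightarrow> real) measure" where
  "Rn n = PiM {..<n} (\<lambda>_. lborel)"

definition inner_n :: "nat \<Rightarrow> (nat \<Rightarrow> real) \<Rightarrow> (nat \<Rightarrow> real) \<Rightarrow> real" where
  "inner_n n x y = (\<Sum>i<n. x i * y i)"

definition sphere_n :: "nat \<Rightarrow> (nat \<Rightarrow> real) set" where
  "sphere_n n = {\<theta> \<in> PiE {..<n} (\<lambda>_. UNIV). inner_n n \<theta> \<theta> = 1}"

definition ball_n :: "nat \<Rightarrow> (nat \<Rightarrow> real) set" where
  "ball_n n = {x \<in> PiE {..<n} (\<lambda>_. UNIV). inner_n n x x \<le> 1}"

text \<open>Uniform (normalised surface) probability measure on S^{n-1}, defined as the
  cone measure: Pi(A) = vol{r x : 0 < r <= 1, x in A} / vol(unit ball), i.e. the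
  push-forward of the uniform distribution on the unit ball under x |-> x/|x|.\<close>
definition unif_sphere :: "nat \<Rightarrow> (nat \<Rightarrow> real) measure" where
  "unif_sphere n = distr (uniform_measure (Rn n) (ball_n n)) (Rn n)
      (\<lambda>x. restrict (\<lambda>i. x i / sqrt (inner_n n x x)) {..<n})"

text \<open>Index set of entries of a p-tensor in (R^n)^{\<otimes>p}: multi-indices (i_1,...,i_p)
  with i_j < n, represented as lists of length p.\<close>
definition tidx :: "nat \<Rightarrow> nat \<Rightarrow> nat list set" where
  "tidx p n = {i. length i = p \<and> (\<forall>j\<in>set i. j < n)}"

definition tpow :: "nat \<Rightarrow> (nat \<Rightarrow> real) \<Rightarrow> nat list \<Rightarrow> real" where
  "tpow p \<theta> i = (\<Prod>j<p. \<theta> (i ! j))"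

definition tinner :: "nat \<Rightarrow> nat \<Rightarrow> (nat list \<Rightarrow> real) \<Rightarrow> (nat list \<Rightarrow> real) \<Rightarrow> real" where
  "tinner p n A B = (\<Sum>i\<in>tidx p n. A i * B i)"

definition obsY :: "nat \<Rightarrow> nat \<Rightarrow> real \<Rightarrow> (nat \<Rightarrow> real) \<Rightarrow> (nat list \<Rightarrow> real) \<Rightarrow> nat list \<Rightarrow> real" where
  "obsY p n lam \<theta>0 Z i = lam * sqrt (real n) * tpow p \<theta>0 i + Z i"

definition posterior :: "nat \<Rightarrow> nat \<Rightarrow> real \<Rightarrow> (nat list \<Rightarrow> real) \<Rightarrow> (nat \<Rightarrow> real) set \<Rightarrow> real" where
  "posterior p n lam Y A =
     (LINT \<theta>:A|unif_sphere n. exp (1/2 * sqrt (real n) * lam * tinner p n (tpow p \<theta>) Y)) /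
     (LINT \<theta>|unif_sphere n. exp (1/2 * sqrt (real n) * lam * tinner p n (tpow p \<theta>) Y))"

definition overlap :: "nat \<Rightarrow> nat \<Rightarrow> (nat \<Rightarrow> real) \<Rightarrow> (nat \<Rightarrow> real) \<Rightarrow> real" where
  "overlap p n \<theta>0 \<theta> = (if even p then \<bar>inner_n n \<theta> \<theta>0\<bar> else inner_n n \<theta> \<theta>0)"

definition setS :: "nat \<Rightarrow> nat \<Rightarrow> (nat \<Rightarrow> real) \<Rightarrow> real \<Rightarrow> (nat \<Rightarrow> real) set" where
  "setS p n \<theta>0 s = {\<theta> \<in> sphere_n n. overlap p n \<theta>0 \<theta> \<le> s}"

definition setT :: "nat \<Rightarrow> nat \<Rightarrow> (nat \<Rightarrow> real) \<Rightarrow> real \<Rightarrow> (nat \<Rightarrow> real) set" where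
  "setT p n \<theta>0 t = {\<theta> \<in> sphere_n n. overlap p n \<theta>0 \<theta> > t}"

end

theory Submission
  imports Defs "HOL-Real_Asymp.Real_Asymp"
begin

text \<open>
  The posterior log-density is \<open>n lam\<^sup>2/2 \<langle>\<theta>,\<theta>0\<rangle>^p + \<surd>n lam/2 Z(\<theta>,\<dots>,\<theta>)\<close>, and the noise
  term is at most \<open>\<surd>n lam/2\<close> times the injective norm \<open>\<parallel>Z\<parallel> = sup |Z(u\<^sub>1,\<dots>,u\<^sub>p)|\<close> over unit
  vectors. A Laplace-type argument shows \<open>\<parallel>Z\<parallel> \<le> C\<^sub>p \<surd>n\<close> eventually, almost surely: since
  \<open>Z\<close> is multilinear, \<open>Z(v) \<ge> Z(u) - \<parallel>Z\<parallel>/2\<close> on a product of caps around \<open>u\<close>, whose uniform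
  measure is at least \<open>r^(n p)\<close>; hence \<open>\<integral> exp (a Z(v)) dv \<ge> exp (a \<parallel>Z\<parallel>/2) r^(n p)\<close>, while the
  expectation of this integral is at most \<open>exp (a\<^sup>2/2)\<close> by the Gaussian moment generating
  function. Markov's inequality with \<open>a = \<surd>n\<close> and Borel--Cantelli conclude.

  Bounding the posterior mass of \<open>S\<^sub>s\<close> by its largest density, and that of \<open>T\<^sub>t\<close> from below
  by the density on the cap \<open>\<langle>\<theta>,\<theta>0\<rangle> > t\<close>, of uniform measure at least \<open>((1-t)/4)^n\<close>, gives
  \<open>1/n log (\<Pi>(S\<^sub>s|Y) / \<Pi>(T\<^sub>t|Y)) \<le> lam\<^sup>2/2 (s^p - t^p) + lam C\<^sub>p + log (4/(1-t))\<close>. For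
  \<open>s = 1 - \<epsilon>\<close>, \<open>t = 1 - \<epsilon>/(2p)\<close> and \<open>\<epsilon> \<approx> lam^(-1/2)\<close> the first term, of order \<open>-lam^(3/2)\<close>,
  dominates.
\<close>

section \<open>Tensors, multilinear forms and the injective norm\<close>

lemma tidx_0: "tidx 0 n = {[]}"
  by (auto simp: tidx_def)

lemma tidx_Suc: "tidx (Suc p) n = (\<lambda>(k, i). k # i) ` ({..<n} \<times> tidx p n)"
  by (auto simp: tidx_def length_Suc_conv image_iff)

lemma finite_tidx: "finite (tidx p n)"
  by (induction p) (auto simp: tidx_0 tidx_Suc)

lemma tidx_nth_less: "i \<in> tidx p n \<Longrightarrow> j < p \<Longrightarrow> i ! j < n"
  by (auto simp: tidx_def)

lemma sum_prod_tidx: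
  "(\<Sum>i\<in>tidx p n. \<Prod>j<p. f j (i ! j)) = (\<Prod>j<p. \<Sum>k<n. (f j k :: real))"
proof (induction p arbitrary: f)
  case 0
  then show ?case by (simp add: tidx_0)
next
  case (Suc p)
  have inj: "inj_on (\<lambda>(k, i). k # i) ({..<n} \<times> tidx p n)"
    by (auto simp: inj_on_def)
  have "(\<Sum>i\<in>tidx (Suc p) n. \<Prod>j<Suc p. f j (i ! j))
      = (\<Sum>(k, i)\<in>{..<n} \<times> tidx p n. f 0 k * (\<Prod>j<p. f (Suc j) (i ! j)))"
    unfolding tidx_Suc by (subst sum.reindex[OF inj])
      (auto simp del: prod.lessThan_Suc simp add: prod.lessThan_Suc_shift intro!: sum.cong)
  also have "\<dots> = (\<Sum>k<n. f 0 k) * (\<Sum>i\<in>tidx p n. \<Prod>j<p. f (Suc j) (i ! j))"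
    by (simp add: sum.cartesian_product[symmetric] sum_product)
  also have "\<dots> = (\<Prod>j<Suc p. \<Sum>k<n. f j k)"
    using Suc[of "\<lambda>j. f (Suc j)"] by (simp del: prod.lessThan_Suc add: prod.lessThan_Suc_shift)
  finally show ?case .
qed

lemma real_sqrt_prod: "sqrt (prod f A) = (\<Prod>x\<in>A. sqrt (f x))"
  by (induction A rule: infinite_finite_induct) (simp_all add: real_sqrt_mult)

definition norm_n :: "nat \<Rightarrow> (nat \<Rightarrow> real) \<Rightarrow> real" where
  "norm_n n x = sqrt (inner_n n x x)"

lemma inner_n_commute: "inner_n n u v = inner_n n v u"
  by (simp add: inner_n_def mult.commute)

lemma inner_n_nonneg: "0 \<le> inner_n n x x"
  by (auto simp: inner_n_def intro!: sum_nonneg)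

lemma inner_n_add_left: "inner_n n (\<lambda>i. a i + b i) y = inner_n n a y + inner_n n b y"
  by (simp add: inner_n_def algebra_simps sum.distrib)

lemma inner_n_diff_left: "inner_n n (\<lambda>i. a i - b i) y = inner_n n a y - inner_n n b y"
  by (simp add: inner_n_def algebra_simps sum_subtractf)

lemma inner_n_restrict_left [simp]: "inner_n n (restrict f {..<n}) g = inner_n n f g"
  by (simp add: inner_n_def)

lemma inner_n_restrict_right [simp]: "inner_n n f (restrict g {..<n}) = inner_n n f g"
  by (simp add: inner_n_def)

lemma norm_n_nonneg: "0 \<le> norm_n n x"
  by (simp add: norm_n_def inner_n_nonneg)

lemma norm_n_power2: "(norm_n n x)\<^sup>2 = inner_n n x x"
  by (simp add: norm_n_def inner_n_nonneg)

lemma norm_n_sphere: "u \<in> sphere_n n \<Longrightarrow> norm_n n u = 1"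
  by (simp add: sphere_n_def norm_n_def)

lemma abs_inner_n_le: "\<bar>inner_n n a b\<bar> \<le> norm_n n a * norm_n n b"
proof -
  have "(inner_n n a b)\<^sup>2 \<le> inner_n n a a * inner_n n b b"
    using Cauchy_Schwarz_ineq_sum[of a b "{..<n}"] by (simp add: inner_n_def power2_eq_square)
  then have "sqrt ((inner_n n a b)\<^sup>2) \<le> sqrt (inner_n n a a * inner_n n b b)"
    by (rule real_sqrt_le_mono)
  then show ?thesis by (simp add: norm_n_def real_sqrt_mult)
qed

lemma norm_n_eq_0D: "norm_n n x = 0 \<Longrightarrow> i < n \<Longrightarrow> x i = 0"
  by (simp add: norm_n_def inner_n_def sum_nonneg_eq_0_iff)

lemma norm_n_diff_sphere:
  assumes "u \<in> sphere_n n" "v \<in> sphere_n n"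
  shows "(norm_n n (\<lambda>i. u i - v i))\<^sup>2 = 2 - 2 * inner_n n u v"
  using assms by (simp add: norm_n_power2 inner_n_diff_left inner_n_commute[of n _ "\<lambda>i. u i - v i"]
      inner_n_commute[of n v u] sphere_n_def)

lemma tinner_tpow_tpow: "tinner p n (tpow p \<theta>) (tpow p \<theta>') = (inner_n n \<theta> \<theta>')^p"
proof -
  have "tinner p n (tpow p \<theta>) (tpow p \<theta>') = (\<Sum>i\<in>tidx p n. \<Prod>j<p. (\<lambda>j k. \<theta> k * \<theta>' k) j (i ! j))"
    by (simp add: tinner_def tpow_def prod.distrib)
  also have "\<dots> = (\<Prod>j<p. \<Sum>k<n. \<theta> k * \<theta>' k)"
    by (rule sum_prod_tidx)
  finally show ?thesis by (simp add: inner_n_def)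
qed

definition multilin :: "nat \<Rightarrow> nat \<Rightarrow> (nat list \<Rightarrow> real) \<Rightarrow> (nat \<Rightarrow> nat \<Rightarrow> real) \<Rightarrow> real" where
  "multilin p n A w = (\<Sum>i\<in>tidx p n. A i * (\<Prod>j<p. w j (i ! j)))"

lemma tinner_tpow_obsY:
  "tinner p n (tpow p \<theta>) (obsY p n lam \<theta>0 A)
     = lam * sqrt (real n) * (inner_n n \<theta> \<theta>0)^p + multilin p n A (\<lambda>_. \<theta>)"
proof -
  have "tinner p n (tpow p \<theta>) (obsY p n lam \<theta>0 A) =
      lam * sqrt (real n) * tinner p n (tpow p \<theta>) (tpow p \<theta>0) + tinner p n (tpow p \<theta>) A"
    by (simp add: tinner_def obsY_def algebra_simps sum.distrib sum_distrib_left)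
  moreover have "tinner p n (tpow p \<theta>) A = multilin p n A (\<lambda>_. \<theta>)"
    by (simp add: tinner_def tpow_def multilin_def mult.commute)
  ultimately show ?thesis
    by (simp only: tinner_tpow_tpow)
qed

lemma sum_power2_prod_tidx:
  "(\<Sum>i\<in>tidx p n. (\<Prod>j<p. w j (i ! j))\<^sup>2) = (\<Prod>j<p. inner_n n (w j) (w j))"
  using sum_prod_tidx[where f="\<lambda>j k. w j k * w j k"]
  by (simp add: power2_eq_square prod.distrib inner_n_def)

lemma abs_multilin_le_frobenius:
  "\<bar>multilin p n A w\<bar> \<le> sqrt (\<Sum>i\<in>tidx p n. (A i)\<^sup>2) * (\<Prod>j<p. norm_n n (w j))"
proof -
  have "(multilin p n A w)\<^sup>2 \<le> (\<Sum>i\<in>tidx p n. (A i)\<^sup>2) * (\<Prod>j<p. inner_n n (w j) (w j))"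
    unfolding multilin_def sum_power2_prod_tidx[symmetric] by (rule Cauchy_Schwarz_ineq_sum)
  then have "sqrt ((multilin p n A w)\<^sup>2) \<le> sqrt ((\<Sum>i\<in>tidx p n. (A i)\<^sup>2) * (\<Prod>j<p. inner_n n (w j) (w j)))"
    by (rule real_sqrt_le_mono)
  then show ?thesis
    by (simp add: real_sqrt_mult norm_n_def real_sqrt_prod)
qed

lemma multilin_cong:
  "(\<And>j i. j < p \<Longrightarrow> i < n \<Longrightarrow> w j i = w' j i) \<Longrightarrow> multilin p n A w = multilin p n A w'"
  unfolding multilin_def
  by (intro sum.cong refl arg_cong2[where f="(*)"] prod.cong) (auto dest: tidx_nth_less)

lemma multilin_scale: "multilin p n A (\<lambda>j i. c j * w j i) = (\<Prod>j<p. c j) * multilin p n A w"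
  unfolding multilin_def by (simp add: prod.distrib sum_distrib_left algebra_simps)

definition hybrid :: "(nat \<Rightarrow> nat \<Rightarrow> real) \<Rightarrow> (nat \<Rightarrow> nat \<Rightarrow> real) \<Rightarrow> nat \<Rightarrow> nat \<Rightarrow> nat \<Rightarrow> real" where
  "hybrid u v k j x = (if j < k then v j x else if j = k then u j x - v j x else u j x)"

lemma prod_diff_telescope:
  fixes a b :: "nat \<Rightarrow> real"
  shows "(\<Prod>j<p. a j) - (\<Prod>j<p. b j) =
    (\<Sum>k<p. \<Prod>j<p. (if j < k then b j else if j = k then a j - b j else a j))"
proof (induction p)
  case 0
  then show ?case by simp
next
  case (Suc p)
  have last: "(\<Prod>j<p. (if j < p then b j else if j = p then a j - b j else a j)) = (\<Prod>j<p. b j)"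
    by (rule prod.cong) auto
  have "(\<Prod>j<Suc p. a j) - (\<Prod>j<Suc p. b j)
      = ((\<Prod>j<p. a j) - (\<Prod>j<p. b j)) * a p + (\<Prod>j<p. b j) * (a p - b p)"
    by (simp add: algebra_simps)
  also have "\<dots> = (\<Sum>k<Suc p. (\<Prod>j<Suc p. (if j < k then b j else if j = k then a j - b j else a j)))"
    by (simp add: Suc sum_distrib_right last)
  finally show ?case .
qed

lemma multilin_diff_hybrid: "multilin p n A u - multilin p n A v = (\<Sum>k<p. multilin p n A (hybrid u v k))"
proof -
  have "multilin p n A u - multilin p n A v
      = (\<Sum>i\<in>tidx p n. A i * ((\<Prod>j<p. u j (i ! j)) - (\<Prod>j<p. v j (i ! j))))"
    by (simp add: multilin_def algebra_simps sum_subtractf)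
  also have "\<dots> = (\<Sum>i\<in>tidx p n. \<Sum>k<p. A i * (\<Prod>j<p. hybrid u v k j (i ! j)))"
    by (simp only: prod_diff_telescope hybrid_def sum_distrib_left)
  also have "\<dots> = (\<Sum>k<p. multilin p n A (hybrid u v k))"
    by (subst sum.swap) (simp add: multilin_def)
  finally show ?thesis .
qed

definition sphere_tuples :: "nat \<Rightarrow> nat \<Rightarrow> (nat \<Rightarrow> nat \<Rightarrow> real) set" where
  "sphere_tuples p n = {u. \<forall>j<p. u j \<in> sphere_n n}"

definition inj_norm :: "nat \<Rightarrow> nat \<Rightarrow> (nat list \<Rightarrow> real) \<Rightarrow> real" where
  "inj_norm p n A = (SUP u\<in>sphere_tuples p n. \<bar>multilin p n A u\<bar>)"

definition basis0 :: "nat \<Rightarrow> nat \<Rightarrow> real" where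
  "basis0 n = restrict (\<lambda>i. if i = 0 then 1 else 0) {..<n}"

lemma basis0_in_sphere: "n \<ge> 1 \<Longrightarrow> basis0 n \<in> sphere_n n"
  by (simp add: sphere_n_def basis0_def inner_n_def if_distrib[of "\<lambda>x. x * _"] cong: if_cong)

lemma sphere_tuples_nonempty: "n \<ge> 1 \<Longrightarrow> sphere_tuples p n \<noteq> {}"
  using basis0_in_sphere[of n] by (auto simp: sphere_tuples_def intro: exI[of _ "\<lambda>_. basis0 n"])

lemma bdd_above_multilin_sphere_tuples: "bdd_above ((\<lambda>u. \<bar>multilin p n A u\<bar>) ` sphere_tuples p n)"
proof (rule bdd_aboveI2)
  fix u
  assume "u \<in> sphere_tuples p n"
  then have "(\<Prod>j<p. norm_n n (u j)) = 1"
    by (simp add: sphere_tuples_def norm_n_sphere)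
  then show "\<bar>multilin p n A u\<bar> \<le> sqrt (\<Sum>i\<in>tidx p n. (A i)\<^sup>2)"
    using abs_multilin_le_frobenius[of p n A u] by simp
qed

lemma abs_multilin_le_inj_norm: "u \<in> sphere_tuples p n \<Longrightarrow> \<bar>multilin p n A u\<bar> \<le> inj_norm p n A"
  unfolding inj_norm_def by (rule cSUP_upper[OF _ bdd_above_multilin_sphere_tuples])

lemma inj_norm_nonneg: "n \<ge> 1 \<Longrightarrow> 0 \<le> inj_norm p n A"
  using abs_multilin_le_inj_norm sphere_tuples_nonempty by (meson abs_ge_zero all_not_in_conv order_trans)

lemma inj_norm_le:
  "n \<ge> 1 \<Longrightarrow> (\<And>u. u \<in> sphere_tuples p n \<Longrightarrow> \<bar>multilin p n A u\<bar> \<le> B) \<Longrightarrow> inj_norm p n A \<le> B"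
  unfolding inj_norm_def using sphere_tuples_nonempty by (rule cSUP_least)

lemma abs_multilin_le_inj_norm_prod:
  assumes n: "n \<ge> 1"
  shows "\<bar>multilin p n A w\<bar> \<le> inj_norm p n A * (\<Prod>j<p. norm_n n (w j))"
proof (cases "\<exists>j<p. norm_n n (w j) = 0")
  case True
  then obtain j where j: "j < p" "norm_n n (w j) = 0"
    by auto
  have "multilin p n A w = 0"
    unfolding multilin_def using j by (intro sum.neutral ballI) (auto dest: tidx_nth_less norm_n_eq_0D)
  then show ?thesis
    using inj_norm_nonneg[OF n] by (simp add: prod_nonneg norm_n_nonneg)
next
  case False
  then have pos: "norm_n n (w j) > 0" if "j < p" for j
    using that norm_n_nonneg[of n "w j"] by force
  define u where "u j = restrict (\<lambda>i. w j i / norm_n n (w j)) {..<n}" for j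
  have "u j \<in> sphere_n n" if "j < p" for j
  proof -
    have "inner_n n (u j) (u j) = inner_n n (w j) (w j) / (norm_n n (w j))\<^sup>2"
      by (simp add: u_def inner_n_def power2_eq_square sum_divide_distrib)
    also have "\<dots> = 1"
      using pos[OF that] by (simp add: norm_n_power2[symmetric])
    finally show ?thesis
      by (simp add: u_def sphere_n_def)
  qed
  then have u: "u \<in> sphere_tuples p n"
    by (simp add: sphere_tuples_def)
  have "multilin p n A w = multilin p n A (\<lambda>j i. norm_n n (w j) * u j i)"
    using pos by (intro multilin_cong) (fastforce simp: u_def)
  also have "\<dots> = (\<Prod>j<p. norm_n n (w j)) * multilin p n A u"
    by (rule multilin_scale)
  finally show ?thesis
    using abs_multilin_le_inj_norm[OF u, of A]
    by (simp add: abs_mult prod_nonneg norm_n_nonneg abs_prod mult_right_mono mult.commute)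
qed

lemma abs_multilin_diag_le_inj_norm:
  assumes n: "n \<ge> 1" and \<theta>: "inner_n n \<theta> \<theta> \<le> 1"
  shows "\<bar>multilin p n A (\<lambda>_. \<theta>)\<bar> \<le> inj_norm p n A"
proof -
  have "norm_n n \<theta> \<le> 1"
    using \<theta> by (simp add: norm_n_def)
  then have "inj_norm p n A * (\<Prod>j<p. norm_n n \<theta>) \<le> inj_norm p n A"
    using norm_n_nonneg inj_norm_nonneg[OF n] by (simp add: power_le_one mult_left_le)
  then show ?thesis
    using abs_multilin_le_inj_norm_prod[OF n, of p A "\<lambda>_. \<theta>"] by linarith
qed

lemma multilin_lipschitz:
  assumes n: "n \<ge> 1" and u: "u \<in> sphere_tuples p n" and v: "v \<in> sphere_tuples p n"
  shows "\<bar>multilin p n A u - multilin p n A v\<bar> \<le> inj_norm p n A * (\<Sum>k<p. norm_n n (\<lambda>i. u k i - v k i))"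
proof -
  have "\<bar>multilin p n A (hybrid u v k)\<bar> \<le> inj_norm p n A * norm_n n (\<lambda>i. u k i - v k i)"
    if k: "k < p" for k
  proof -
    have "hybrid u v k j = (if j < k then v j else if j = k then (\<lambda>x. u j x - v j x) else u j)" for j
      by (auto simp: hybrid_def)
    then have "(\<Prod>j<p. norm_n n (hybrid u v k j)) = (\<Prod>j<p. if j = k then norm_n n (\<lambda>i. u k i - v k i) else 1)"
      using u v by (intro prod.cong refl) (auto simp: sphere_tuples_def norm_n_sphere)
    also have "\<dots> = norm_n n (\<lambda>i. u k i - v k i)"
      using k by (simp add: prod.delta)
    finally show ?thesis
      using abs_multilin_le_inj_norm_prod[OF n, of p A "hybrid u v k"] by simp
  qed
  then have "(\<Sum>k<p. \<bar>multilin p n A (hybrid u v k)\<bar>) \<le> inj_norm p n A * (\<Sum>k<p. norm_n n (\<lambda>i. u k i - v k i))"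
    unfolding sum_distrib_left by (rule sum_mono) simp
  then show ?thesis
    unfolding multilin_diff_hybrid using sum_abs[of "\<lambda>k. multilin p n A (hybrid u v k)" "{..<p}"]
    by linarith
qed

lemma multilin_neg_first:
  assumes p: "p \<ge> 1" and u: "u \<in> sphere_tuples p n"
  defines "u' \<equiv> u(0 := restrict (\<lambda>i. - u 0 i) {..<n})"
  shows "u' \<in> sphere_tuples p n" "multilin p n A u' = - multilin p n A u"
proof -
  have "u 0 \<in> sphere_n n"
    using u p by (simp add: sphere_tuples_def)
  then show "u' \<in> sphere_tuples p n"
    using u by (simp add: sphere_tuples_def u'_def sphere_n_def inner_n_def)
  have "multilin p n A u' = multilin p n A (\<lambda>j i. (if j = 0 then -1 else 1) * u j i)"
    by (intro multilin_cong) (auto simp: u'_def)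
  also have "\<dots> = - multilin p n A u"
    using p by (simp add: multilin_scale prod.delta)
  finally show "multilin p n A u' = - multilin p n A u" .
qed

section \<open>The uniform measure on the sphere\<close>

definition normalize_n :: "nat \<Rightarrow> (nat \<Rightarrow> real) \<Rightarrow> (nat \<Rightarrow> real)" where
  "normalize_n n x = restrict (\<lambda>i. x i / sqrt (inner_n n x x)) {..<n}"

lemma unif_sphere_eq_distr:
  "unif_sphere n = distr (uniform_measure (Rn n) (ball_n n)) (Rn n) (normalize_n n)"
  by (simp add: unif_sphere_def normalize_n_def[abs_def])

lemma space_Rn: "space (Rn n) = PiE {..<n} (\<lambda>_. UNIV)"
  by (simp add: Rn_def space_PiM)

lemma sets_unif_sphere [simp, measurable_cong]: "sets (unif_sphere n) = sets (Rn n)"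
  by (simp add: unif_sphere_eq_distr)

lemma space_unif_sphere [simp]: "space (unif_sphere n) = space (Rn n)"
  by (simp add: unif_sphere_eq_distr)

lemma inner_n_measurable [measurable]: "(\<lambda>x. inner_n n x y) \<in> borel_measurable (Rn n)"
  unfolding inner_n_def Rn_def by measurable

lemma inner_n_self_measurable [measurable]: "(\<lambda>x. inner_n n x x) \<in> borel_measurable (Rn n)"
  unfolding inner_n_def Rn_def by measurable

lemma component_measurable_Rn [measurable]: "i < n \<Longrightarrow> (\<lambda>x. x i) \<in> borel_measurable (Rn n)"
  unfolding Rn_def by measurable

lemma normalize_n_measurable [measurable]: "normalize_n n \<in> Rn n \<rightarrow>\<^sub>M Rn n"
  unfolding normalize_n_def by (subst (2) Rn_def) (rule measurable_restrict, simp)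

lemma sets_Rn_Collect:
  assumes [measurable]: "Measurable.pred (Rn n) P"
  shows "{x \<in> PiE {..<n} (\<lambda>_. UNIV). P x} \<in> sets (Rn n)"
  unfolding space_Rn[symmetric] by measurable

lemma ball_n_sets [measurable]: "ball_n n \<in> sets (Rn n)"
  unfolding ball_n_def by (rule sets_Rn_Collect) measurable

lemma sphere_n_sets [measurable]: "sphere_n n \<in> sets (Rn n)"
  unfolding sphere_n_def by (rule sets_Rn_Collect) measurable

lemma lborel_affine_emeasure:
  fixes r :: real
  assumes r: "r > 0" and A: "A \<in> sets borel"
  shows "emeasure lborel A = ennreal r * emeasure lborel ((\<lambda>x. t + r * x) -` A)"
proof -
  have "emeasure lborel A = emeasure (density (distr lborel borel (\<lambda>x. t + r * x)) (\<lambda>_. ennreal \<bar>r\<bar>)) A"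
    using lborel_real_affine[of r t] r by simp
  also have "\<dots> = ennreal r * emeasure (distr lborel borel (\<lambda>x. t + r * x)) A"
    using r A by (subst emeasure_density_const) auto
  also have "\<dots> = ennreal r * emeasure lborel ((\<lambda>x. t + r * x) -` A)"
    using A by (subst emeasure_distr) auto
  finally show ?thesis .
qed

lemma affine_vimage_sets [measurable]: "A \<in> sets borel \<Longrightarrow> (\<lambda>x::real. t + r * x) -` A \<in> sets borel"
  using measurable_sets_borel[of "\<lambda>x::real. t + r * x" borel A] by simp

lemma emeasure_Rn_PiE:
  assumes "\<And>i. i < n \<Longrightarrow> A i \<in> sets borel"
  shows "emeasure (Rn n) (PiE {..<n} A) = (\<Prod>i<n. emeasure lborel (A i))"
proof -
  interpret product_sigma_finite "\<lambda>_::nat. lborel :: real measure"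
    by standard
  show ?thesis
    unfolding Rn_def using assms by (subst emeasure_PiM) auto
qed

definition affine_n :: "nat \<Rightarrow> (nat \<Rightarrow> real) \<Rightarrow> real \<Rightarrow> (nat \<Rightarrow> real) \<Rightarrow> (nat \<Rightarrow> real)" where
  "affine_n n c r x = restrict (\<lambda>i. c i + r * x i) {..<n}"

lemma affine_n_measurable [measurable]: "affine_n n c r \<in> Rn n \<rightarrow>\<^sub>M Rn n"
  unfolding affine_n_def by (subst (2) Rn_def) (rule measurable_restrict, simp)

lemma distr_affine_n_density:
  fixes r :: real
  assumes r: "r > 0"
  shows "distr (density (Rn n) (\<lambda>_. ennreal (r^n))) (Rn n) (affine_n n c r) = Rn n"
proof -
  interpret product_sigma_finite "\<lambda>_::nat. lborel :: real measure"
    by standard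
  have "distr (density (Rn n) (\<lambda>_. ennreal (r^n))) (Rn n) (affine_n n c r) = PiM {..<n} (\<lambda>_. lborel)"
  proof (rule PiM_eqI)
  fix A :: "nat \<Rightarrow> real set"
  assume A: "\<And>i. i \<in> {..<n} \<Longrightarrow> A i \<in> sets lborel"
  have AR: "PiE {..<n} A \<in> sets (Rn n)"
    unfolding Rn_def using A by (intro sets_PiM_I_finite) auto
  have pre: "affine_n n c r -` PiE {..<n} A \<inter> space (Rn n) = PiE {..<n} (\<lambda>i. (\<lambda>x. c i + r * x) -` A i)"
    by (auto simp: affine_n_def space_Rn PiE_iff extensional_def)
  have "emeasure (distr (density (Rn n) (\<lambda>_. ennreal (r ^ n))) (Rn n) (affine_n n c r)) (PiE {..<n} A)
      = ennreal (r^n) * emeasure (Rn n) (PiE {..<n} (\<lambda>i. (\<lambda>x. c i + r * x) -` A i))"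
    using AR by (subst emeasure_distr) (auto simp: pre[symmetric] intro!: emeasure_density_const)
  also have "\<dots> = (\<Prod>i<n. ennreal r * emeasure lborel ((\<lambda>x. c i + r * x) -` A i))"
    using A r by (subst emeasure_Rn_PiE) (auto simp: prod.distrib ennreal_power)
  also have "\<dots> = (\<Prod>i<n. emeasure lborel (A i))"
    using A r by (intro prod.cong refl lborel_affine_emeasure[symmetric]) auto
  finally show "emeasure (distr (density (Rn n) (\<lambda>_. ennreal (r ^ n))) (Rn n) (affine_n n c r)) (PiE {..<n} A)
      = (\<Prod>i\<in>{..<n}. emeasure lborel (A i))"
    by simp
qed (simp_all add: Rn_def)
  then show ?thesis
    by (simp add: Rn_def)
qed

lemma emeasure_Rn_affine_vimage:
  fixes r :: real
  assumes r: "r > 0" and B: "B \<in> sets (Rn n)"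
  shows "emeasure (Rn n) B = ennreal (r^n) * emeasure (Rn n) (affine_n n c r -` B \<inter> space (Rn n))"
proof -
  have "emeasure (Rn n) B = emeasure (distr (density (Rn n) (\<lambda>_. ennreal (r^n))) (Rn n) (affine_n n c r)) B"
    by (simp add: distr_affine_n_density[OF r])
  also have "\<dots> = ennreal (r^n) * emeasure (Rn n) (affine_n n c r -` B \<inter> space (Rn n))"
    using B by (subst emeasure_distr) (auto intro!: emeasure_density_const)
  finally show ?thesis .
qed

lemma ball_n_subset_box: "ball_n n \<subseteq> PiE {..<n} (\<lambda>_. {-1..1})"
proof
  fix x
  assume x: "x \<in> ball_n n"
  have "\<bar>x i\<bar> \<le> 1" if "i < n" for i
  proof -
    have "(x i)\<^sup>2 \<le> (\<Sum>j<n. x j * x j)"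
      unfolding power2_eq_square using that by (intro member_le_sum) auto
    also have "\<dots> \<le> 1"
      using x by (simp add: ball_n_def inner_n_def)
    finally show ?thesis
      by (simp add: abs_square_le_1)
  qed
  then show "x \<in> PiE {..<n} (\<lambda>_. {-1..1})"
    using x by (auto simp: ball_n_def PiE_iff abs_le_iff)
qed

lemma box_subset_ball_n:
  assumes n: "n \<ge> 1"
  shows "PiE {..<n} (\<lambda>_. {-1/real n..1/real n}) \<subseteq> ball_n n"
proof
  fix x
  assume x: "x \<in> PiE {..<n} (\<lambda>_. {-1/real n..1/real n})"
  have "(\<Sum>j<n. x j * x j) \<le> (\<Sum>j<n. (1/real n) * (1/real n))"
  proof (intro sum_mono)
    fix j
    assume "j \<in> {..<n}"
    then have "- (1/real n) \<le> x j \<and> x j \<le> 1/real n"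
      using x unfolding PiE_iff by auto
    then have "\<bar>x j\<bar> \<le> 1/real n"
      by linarith
    then have "\<bar>x j\<bar> * \<bar>x j\<bar> \<le> (1/real n) * (1/real n)"
      by (intro mult_mono) auto
    then show "x j * x j \<le> (1/real n) * (1/real n)"
      by (simp only: abs_mult_self_eq)
  qed
  also have "\<dots> = 1 / real n"
    using n by simp
  also have "\<dots> \<le> 1"
    using n by simp
  finally show "x \<in> ball_n n"
    using x by (auto simp: ball_n_def inner_n_def PiE_iff)
qed

lemma emeasure_ball_n_finite: "emeasure (Rn n) (ball_n n) < \<infinity>"
proof -
  have "emeasure (Rn n) (ball_n n) \<le> emeasure (Rn n) (PiE {..<n} (\<lambda>_. {-1..1}))"
    by (intro emeasure_mono ball_n_subset_box) (simp add: Rn_def sets_PiM_I_finite)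
  also have "\<dots> = (\<Prod>i<n. emeasure lborel {-1..1::real})"
    by (subst emeasure_Rn_PiE) auto
  also have "\<dots> < \<infinity>"
    by (simp add: power_less_top_ennreal)
  finally show ?thesis .
qed

lemma emeasure_ball_n_pos:
  assumes n: "n \<ge> 1"
  shows "emeasure (Rn n) (ball_n n) > 0"
proof -
  have "0 < (\<Prod>i<n. emeasure lborel {-1/real n..1/real n})"
    using n by simp (subst ennreal_power, auto)
  also have "\<dots> = emeasure (Rn n) (PiE {..<n} (\<lambda>_. {-1/real n..1/real n}))"
    by (subst emeasure_Rn_PiE) auto
  also have "\<dots> \<le> emeasure (Rn n) (ball_n n)"
    by (intro emeasure_mono box_subset_ball_n n) simp
  finally show ?thesis .
qed

lemma prob_space_unif_sphere:
  assumes n: "n \<ge> 1"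
  shows "prob_space (unif_sphere n)"
proof -
  have "prob_space (uniform_measure (Rn n) (ball_n n))"
    using emeasure_ball_n_pos[OF n] emeasure_ball_n_finite[of n] by (intro prob_space_uniform_measure) auto
  then show ?thesis
    unfolding unif_sphere_eq_distr by (rule prob_space.prob_space_distr) simp
qed

lemma emeasure_unif_sphere:
  assumes "A \<in> sets (Rn n)"
  shows "emeasure (unif_sphere n) A
    = emeasure (Rn n) (ball_n n \<inter> (normalize_n n -` A \<inter> space (Rn n))) / emeasure (Rn n) (ball_n n)"
  unfolding unif_sphere_eq_distr using assms
  by (subst emeasure_distr) (auto intro!: emeasure_uniform_measure)

lemma inner_normalize_n: "inner_n n (normalize_n n x) y = inner_n n x y / sqrt (inner_n n x x)"
  by (simp add: normalize_n_def inner_n_def sum_divide_distrib)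

lemma normalize_n_in_sphere:
  assumes "inner_n n x x > 0"
  shows "normalize_n n x \<in> sphere_n n"
proof -
  have "inner_n n (\<lambda>i. x i / sqrt (inner_n n x x)) (\<lambda>i. x i / sqrt (inner_n n x x))
      = inner_n n x x / (sqrt (inner_n n x x))\<^sup>2"
    by (simp add: inner_n_def power2_eq_square sum_divide_distrib)
  then show ?thesis
    using assms by (simp add: sphere_n_def normalize_n_def)
qed

lemma AE_unif_sphere_in_ball: "AE \<theta> in unif_sphere n. inner_n n \<theta> \<theta> \<le> 1"
proof -
  have "inner_n n (normalize_n n x) (normalize_n n x) \<le> 1" for x
  proof (cases "inner_n n x x > 0")
    case True
    then show ?thesis
      using normalize_n_in_sphere[OF True] by (simp add: sphere_n_def)
  next
    case False
    then have "inner_n n x x = 0"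
      using inner_n_nonneg[of n x] by simp
    then show ?thesis
      by (simp add: inner_normalize_n inner_n_commute[of n x "normalize_n n x"])
  qed
  then show ?thesis
    unfolding unif_sphere_eq_distr by (subst AE_distr_iff) (auto intro!: AE_I2)
qed

definition cap :: "nat \<Rightarrow> real \<Rightarrow> (nat \<Rightarrow> real) \<Rightarrow> (nat \<Rightarrow> real) set" where
  "cap n c w = {v \<in> sphere_n n. c < inner_n n v w}"

lemma cap_sets [measurable]: "cap n c w \<in> sets (Rn n)"
proof -
  have "cap n c w = {x \<in> PiE {..<n} (\<lambda>_. UNIV). inner_n n x x = 1 \<and> c < inner_n n x w}"
    by (auto simp: cap_def sphere_n_def)
  also have "\<dots> \<in> sets (Rn n)"
    by (rule sets_Rn_Collect) measurable
  finally show ?thesis .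
qed

lemma ball_half_subset_cone_cap:
  assumes u: "u \<in> sphere_n n" and r: "0 < r" "r \<le> 1/4"
    and x: "x \<in> space (Rn n)" "inner_n n (\<lambda>i. x i - u i / 2) (\<lambda>i. x i - u i / 2) \<le> r\<^sup>2"
  shows "x \<in> ball_n n" "normalize_n n x \<in> cap n (1 - 4 * r) u"
proof -
  define d where "d i = x i - u i / 2" for i
  have x_eq: "x = (\<lambda>i. u i / 2 + d i)"
    by (auto simp: d_def)
  have uu: "inner_n n u u = 1"
    using u by (simp add: sphere_n_def)
  have nd: "norm_n n d \<le> r"
    using real_sqrt_le_mono[OF x(2)] r by (simp add: norm_n_def d_def[abs_def])
  have half_u: "inner_n n (\<lambda>i. u i / 2) v = inner_n n u v / 2" for v
    by (simp add: inner_n_def sum_divide_distrib)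
  have ud: "\<bar>inner_n n u d\<bar> \<le> r"
    using abs_inner_n_le[of n u d] nd by (simp add: norm_n_sphere[OF u])
  have xx: "inner_n n x x = 1/4 + inner_n n u d + inner_n n d d"
    by (subst (1 2) x_eq) (simp add: inner_n_add_left half_u uu inner_n_commute[of n _ "\<lambda>i. u i / 2 + d i"]
        inner_n_commute[of n d u] add_divide_distrib)
  have "inner_n n d d \<le> r\<^sup>2"
    using x(2) by (simp add: d_def[abs_def])
  then have xx_le: "inner_n n x x \<le> (1/2 + r)\<^sup>2"
    using xx ud by (simp add: power2_eq_square algebra_simps)
  have xu: "inner_n n x u \<ge> 1/2 - r"
    using ud by (subst x_eq) (simp add: inner_n_add_left half_u uu inner_n_commute[of n d u])
  have "(1/2 + r)\<^sup>2 \<le> 1"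
    using r by (intro power_le_one) auto
  then show "x \<in> ball_n n"
    using xx_le x(1) by (simp add: ball_n_def space_Rn)
  have "\<bar>inner_n n x u\<bar>\<^sup>2 \<le> (norm_n n x)\<^sup>2"
    using abs_inner_n_le[of n x u] by (intro power_mono) (simp_all add: norm_n_sphere[OF u])
  then have "(inner_n n x u)\<^sup>2 \<le> inner_n n x x"
    by (simp add: norm_n_power2)
  moreover have "(inner_n n x u)\<^sup>2 > 0"
    using xu r by simp
  ultimately have xpos: "inner_n n x x > 0"
    by linarith
  have "1 - 4 * r < (1/2 - r) / (1/2 + r)"
    using r by (simp add: field_simps)
  also have "\<dots> \<le> inner_n n x u / sqrt (inner_n n x x)"
    using r xu xpos real_sqrt_le_mono[OF xx_le] by (intro frac_le) auto
  finally show "normalize_n n x \<in> cap n (1 - 4 * r) u"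
    using normalize_n_in_sphere[OF xpos] by (simp add: cap_def inner_normalize_n)
qed

text \<open>The ball of radius \<open>r\<close> around \<open>u/2\<close> has volume \<open>r^n\<close> times that of the unit ball and
  lies in the cone over the cap.\<close>

lemma emeasure_cap_ge:
  assumes n: "n \<ge> 1" and u: "u \<in> sphere_n n" and r: "0 < r" "r \<le> 1/4"
  shows "ennreal (r^n) \<le> emeasure (unif_sphere n) (cap n (1 - 4 * r) u)"
proof -
  define c where "c i = u i / 2" for i
  define G where "G = {x \<in> space (Rn n). inner_n n (\<lambda>i. x i - c i) (\<lambda>i. x i - c i) \<le> r\<^sup>2}"
  have G_sets: "G \<in> sets (Rn n)"
    unfolding G_def inner_n_def by measurable
  have "inner_n n (\<lambda>i. affine_n n c r x i - c i) (\<lambda>i. affine_n n c r x i - c i) = r\<^sup>2 * inner_n n x x" for x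
    by (simp add: affine_n_def inner_n_def sum_distrib_left power2_eq_square algebra_simps)
  then have "affine_n n c r -` G \<inter> space (Rn n) = ball_n n"
    using r by (auto simp: G_def ball_n_def space_Rn affine_n_def)
  then have vol_G: "emeasure (Rn n) G = ennreal (r^n) * emeasure (Rn n) (ball_n n)"
    using emeasure_Rn_affine_vimage[OF r(1) G_sets, of c] by simp
  have "G \<subseteq> ball_n n \<inter> (normalize_n n -` cap n (1 - 4 * r) u \<inter> space (Rn n))"
    using ball_half_subset_cone_cap[OF u r] by (auto simp: G_def c_def)
  then have "emeasure (Rn n) G / emeasure (Rn n) (ball_n n)
      \<le> emeasure (Rn n) (ball_n n \<inter> (normalize_n n -` cap n (1 - 4 * r) u \<inter> space (Rn n))) / emeasure (Rn n) (ball_n n)"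
    by (intro divide_right_mono_ennreal emeasure_mono) measurable
  then show ?thesis
    using vol_G emeasure_ball_n_pos[OF n] emeasure_ball_n_finite[of n]
    by (simp add: emeasure_unif_sphere ennreal_mult_divide_eq)
qed

lemma exists_orthogonal_unit:
  assumes n: "n \<ge> 2" and u: "u \<in> sphere_n n"
  shows "\<exists>w \<in> sphere_n n. inner_n n w u = 0"
proof -
  obtain a where a: "a < n" "u a \<noteq> 0"
    using u by (force simp: sphere_n_def inner_n_def)
  define b where "b = (if a = 0 then 1 else 0::nat)"
  have b: "b < n" "b \<noteq> a"
    using n by (auto simp: b_def)
  define w where "w i = (if i = a then u b else if i = b then - u a else 0)" for i
  have "inner_n n w u = u b * u a - u a * u b"
    unfolding inner_n_def using a b by (simp add: w_def if_distrib[of "\<lambda>x. x * _"] sum.If_cases)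
  moreover have "inner_n n w w = (u b)\<^sup>2 + (u a)\<^sup>2"
    unfolding inner_n_def using a b by (simp add: w_def if_distrib[of "\<lambda>x. x * _"] sum.If_cases power2_eq_square)
  ultimately show ?thesis
    using a by (intro bexI[of _ "normalize_n n w"]) (simp_all add: inner_normalize_n normalize_n_in_sphere
        add_nonneg_pos)
qed

section \<open>Concentration of the injective norm of a Gaussian tensor\<close>

lemma multilin_ge_on_caps:
  assumes n: "n \<ge> 1" and u: "u \<in> sphere_tuples p n"
    and v: "v \<in> PiE {..<p} (\<lambda>j. cap n (1 - 1 / (8 * (real p)\<^sup>2)) (u j))"
  shows "multilin p n A u - inj_norm p n A / 2 \<le> multilin p n A v"
proof -
  have v_sph: "v \<in> sphere_tuples p n"
    using v by (auto simp: sphere_tuples_def cap_def PiE_iff)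
  have "norm_n n (\<lambda>i. u k i - v k i) \<le> 1 / (2 * real p)" if k: "k < p" for k
  proof -
    have "u k \<in> sphere_n n" "v k \<in> sphere_n n" "inner_n n (v k) (u k) > 1 - 1 / (8 * (real p)\<^sup>2)"
      using u v k by (auto simp: sphere_tuples_def cap_def PiE_iff)
    then have "(norm_n n (\<lambda>i. u k i - v k i))\<^sup>2 \<le> 2 * (1 / (8 * (real p)\<^sup>2))"
      by (simp add: norm_n_diff_sphere inner_n_commute[of n "u k"])
    also have "\<dots> = (1 / (2 * real p))\<^sup>2"
      by (simp add: power2_eq_square)
    finally show ?thesis
      by (rule power2_le_imp_le) simp
  qed
  then have "(\<Sum>k<p. norm_n n (\<lambda>i. u k i - v k i)) \<le> real p * (1 / (2 * real p))"
    using sum_mono[of "{..<p}" "\<lambda>k. norm_n n (\<lambda>i. u k i - v k i)" "\<lambda>_. 1 / (2 * real p)"] by simp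
  also have "\<dots> \<le> 1 / 2"
    by simp
  finally have "inj_norm p n A * (\<Sum>k<p. norm_n n (\<lambda>i. u k i - v k i)) \<le> inj_norm p n A * (1 / 2)"
    using inj_norm_nonneg[OF n] by (rule mult_left_mono)
  then show ?thesis
    using multilin_lipschitz[OF n u v_sph, of A] by linarith
qed

text \<open>The indicator is \<open>1\<close> almost everywhere; it makes \<open>|v j| \<le> 1\<close> hold everywhere.\<close>

definition exp_multilin_integral :: "nat \<Rightarrow> nat \<Rightarrow> (nat list \<Rightarrow> real) \<Rightarrow> real \<Rightarrow> ennreal" where
  "exp_multilin_integral p n A a =
     (\<integral>\<^sup>+v. ennreal (exp (a * multilin p n A v)) * indicator (PiE {..<p} (\<lambda>_. ball_n n)) v
        \<partial>PiM {..<p} (\<lambda>_. unif_sphere n))"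

lemma product_sigma_finite_unif_sphere: "n \<ge> 1 \<Longrightarrow> product_sigma_finite (\<lambda>_::nat. unif_sphere n)"
  unfolding product_sigma_finite_def using prob_space_unif_sphere prob_space_imp_sigma_finite by blast

lemma emeasure_PiM_caps_ge:
  assumes n: "n \<ge> 1" and u: "u \<in> sphere_tuples p n" and r: "0 < r" "r \<le> 1/4"
  shows "ennreal (r^(n*p))
    \<le> emeasure (PiM {..<p} (\<lambda>_. unif_sphere n)) (PiE {..<p} (\<lambda>j. cap n (1 - 4 * r) (u j)))"
proof -
  interpret product_sigma_finite "\<lambda>_::nat. unif_sphere n"
    using product_sigma_finite_unif_sphere[OF n] .
  have "ennreal (r^(n*p)) = (\<Prod>j<p. ennreal (r^n))"
    using r by (simp add: ennreal_power power_mult)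
  also have "\<dots> \<le> (\<Prod>j<p. emeasure (unif_sphere n) (cap n (1 - 4 * r) (u j)))"
    using u r by (intro prod_mono_ennreal emeasure_cap_ge n) (auto simp: sphere_tuples_def)
  also have "\<dots> = emeasure (PiM {..<p} (\<lambda>_. unif_sphere n)) (PiE {..<p} (\<lambda>j. cap n (1 - 4 * r) (u j)))"
    by (subst emeasure_PiM) auto
  finally show ?thesis .
qed

lemma multilin_le_of_exp_integral_le:
  assumes n: "n \<ge> 1" and p: "p \<ge> 1" and a: "a > 0" and B: "B > 0"
    and I: "exp_multilin_integral p n A a \<le> ennreal B"
    and u: "u \<in> sphere_tuples p n"
  shows "multilin p n A u \<le> inj_norm p n A / 2 + (ln B + real (p * n) * ln (32 * (real p)\<^sup>2)) / a"
proof -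
  define r where "r = 1 / (32 * (real p)\<^sup>2)"
  have "1 \<le> (real p)\<^sup>2"
    using p by simp
  then have p2: "4 \<le> 32 * (real p)\<^sup>2"
    by linarith
  have "r \<le> 1/4"
    unfolding r_def using p by (intro divide_left_mono[OF p2]) auto
  then have r: "0 < r" "r \<le> 1/4"
    using p by (simp_all add: r_def)
  define C where "C = PiE {..<p} (\<lambda>j. cap n (1 - 4 * r) (u j))"
  define m where "m = multilin p n A u - inj_norm p n A / 2"
  have C_sets: "C \<in> sets (PiM {..<p} (\<lambda>_. unif_sphere n))"
    unfolding C_def by (intro sets_PiM_I_finite) auto
  have "ennreal (r^(n*p)) \<le> emeasure (PiM {..<p} (\<lambda>_. unif_sphere n)) C"
    unfolding C_def by (rule emeasure_PiM_caps_ge[OF n u r])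
  then have "ennreal (exp (a * m)) * ennreal (r^(n*p))
      \<le> (\<integral>\<^sup>+v. ennreal (exp (a * m)) * indicator C v \<partial>PiM {..<p} (\<lambda>_. unif_sphere n))"
    using C_sets by (simp add: nn_integral_cmult_indicator mult_left_mono)
  also have "\<dots> \<le> exp_multilin_integral p n A a"
    unfolding exp_multilin_integral_def
  proof (intro nn_integral_mono)
    fix v
    have "v \<in> C \<Longrightarrow> v \<in> PiE {..<p} (\<lambda>_. ball_n n)"
      by (auto simp: C_def cap_def PiE_iff sphere_n_def ball_n_def)
    moreover have "1 - 4 * r = 1 - 1 / (8 * (real p)\<^sup>2)"
      by (simp add: r_def)
    then have "v \<in> C \<Longrightarrow> m \<le> multilin p n A v"
      unfolding m_def C_def using multilin_ge_on_caps[OF n u, of v A] by simp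
    ultimately show "ennreal (exp (a * m)) * indicator C v
        \<le> ennreal (exp (a * multilin p n A v)) * indicator (PiE {..<p} (\<lambda>_. ball_n n)) v"
      using a by (cases "v \<in> C") auto
  qed
  also note I
  finally have "exp (a * m) * r^(n*p) \<le> B"
    using B r by (simp add: ennreal_mult[symmetric])
  then have "a * m + real (n * p) * ln r \<le> ln B"
    using r B by (subst (asm) ln_le_cancel_iff[symmetric]) (auto simp: ln_mult ln_realpow)
  moreover have "ln r = - ln (32 * (real p)\<^sup>2)"
    using p by (simp add: r_def ln_div)
  ultimately have "a * m \<le> ln B + real (p * n) * ln (32 * (real p)\<^sup>2)"
    by (simp add: mult.commute)
  then have "m \<le> (ln B + real (p * n) * ln (32 * (real p)\<^sup>2)) / a"
    using a by (simp add: pos_le_divide_eq mult.commute)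
  then show ?thesis
    by (simp add: m_def)
qed

lemma inj_norm_le_of_exp_integral_le:
  assumes n: "n \<ge> 1" and p: "p \<ge> 1" and a: "a > 0" and B: "B > 0"
    and I: "exp_multilin_integral p n A a \<le> ennreal B"
  shows "inj_norm p n A \<le> 2 * (ln B + real (p * n) * ln (32 * (real p)\<^sup>2)) / a"
proof -
  define R where "R = (ln B + real (p * n) * ln (32 * (real p)\<^sup>2)) / a"
  have "inj_norm p n A \<le> inj_norm p n A / 2 + R"
  proof (rule inj_norm_le[OF n])
    fix u
    assume u: "u \<in> sphere_tuples p n"
    show "\<bar>multilin p n A u\<bar> \<le> inj_norm p n A / 2 + R"
      using multilin_le_of_exp_integral_le[OF n p a B I u]
        multilin_le_of_exp_integral_le[OF n p a B I multilin_neg_first(1)[OF p u]]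
        multilin_neg_first(2)[OF p u, of A]
      unfolding R_def by linarith
  qed
  then show ?thesis
    unfolding R_def by (simp add: field_simps)
qed

lemma std_normal_density_mult_exp:
  "std_normal_density x * exp (b * x) = exp (b\<^sup>2 / 2) * normal_density b 1 x"
proof -
  have "exp (- x\<^sup>2 / 2) * exp (b * x) = exp (b\<^sup>2 / 2) * exp (- (x - b)\<^sup>2 / 2)"
    unfolding exp_add[symmetric] by (simp add: power2_eq_square field_simps)
  then show ?thesis
    by (simp add: std_normal_density_def normal_density_def)
qed

lemma (in prob_space) nn_integral_exp_std_normal:
  assumes X: "distributed M lborel X (\<lambda>x. ennreal (std_normal_density x))"
  shows "(\<integral>\<^sup>+\<omega>. ennreal (exp (b * X \<omega>)) \<partial>M) = ennreal (exp (b\<^sup>2 / 2))"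
proof -
  have "(\<integral>\<^sup>+\<omega>. ennreal (exp (b * X \<omega>)) \<partial>M)
      = (\<integral>\<^sup>+x. ennreal (std_normal_density x) * ennreal (exp (b * x)) \<partial>lborel)"
    using distributed_nn_integral[OF X, of "\<lambda>x. ennreal (exp (b * x))"] by simp
  also have "\<dots> = (\<integral>\<^sup>+x. ennreal (exp (b\<^sup>2 / 2)) * ennreal (normal_density b 1 x) \<partial>lborel)"
    by (intro nn_integral_cong) (simp add: ennreal_mult[symmetric] std_normal_density_mult_exp)
  also have "\<dots> = ennreal (exp (b\<^sup>2 / 2)) * (\<integral>\<^sup>+x. ennreal (normal_density b 1 x) \<partial>lborel)"
    by (rule nn_integral_cmult) simp
  also have "(\<integral>\<^sup>+x. ennreal (normal_density b 1 x) \<partial>lborel) = 1"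
    by (subst nn_integral_eq_integral) auto
  finally show ?thesis
    by simp
qed

lemma (in prob_space) nn_integral_exp_multilin:
  assumes indep: "indep_vars (\<lambda>_. borel) (\<lambda>i \<omega>. Z \<omega> i) (tidx p n)"
    and gauss: "\<And>i. i \<in> tidx p n \<Longrightarrow> distributed M lborel (\<lambda>\<omega>. Z \<omega> i) (\<lambda>x. ennreal (std_normal_density x))"
  shows "(\<integral>\<^sup>+\<omega>. ennreal (exp (a * multilin p n (Z \<omega>) v)) \<partial>M)
     = ennreal (exp (a\<^sup>2 / 2 * (\<Prod>j<p. inner_n n (v j) (v j))))"
proof -
  define c where "c i = (\<Prod>j<p. v j (i ! j))" for i
  have "(\<integral>\<^sup>+\<omega>. ennreal (exp (a * multilin p n (Z \<omega>) v)) \<partial>M)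
      = (\<integral>\<^sup>+\<omega>. (\<Prod>i\<in>tidx p n. ennreal (exp ((a * c i) * Z \<omega> i))) \<partial>M)"
    by (intro nn_integral_cong) (simp add: multilin_def c_def sum_distrib_left exp_sum finite_tidx
        prod_ennreal mult.commute mult.left_commute)
  also have "\<dots> = (\<Prod>i\<in>tidx p n. \<integral>\<^sup>+\<omega>. ennreal (exp ((a * c i) * Z \<omega> i)) \<partial>M)"
    by (rule indep_vars_nn_integral[OF finite_tidx
          indep_vars_compose2[OF indep, where Y="\<lambda>i z. ennreal (exp ((a * c i) * z))"]]) simp_all
  also have "\<dots> = (\<Prod>i\<in>tidx p n. ennreal (exp ((a * c i)\<^sup>2 / 2)))"
    by (intro prod.cong refl nn_integral_exp_std_normal gauss)
  also have "\<dots> = ennreal (exp (a\<^sup>2 / 2 * (\<Sum>i\<in>tidx p n. (c i)\<^sup>2)))"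
    by (simp add: prod_ennreal exp_sum finite_tidx power_mult_distrib sum_distrib_left)
  finally show ?thesis
    unfolding c_def sum_power2_prod_tidx .
qed

lemma multilin_measurable_pair:
  assumes Z: "\<And>i. i \<in> tidx p n \<Longrightarrow> (\<lambda>\<omega>. Z \<omega> i) \<in> borel_measurable M"
  shows "(\<lambda>x. multilin p n (Z (fst x)) (snd x)) \<in> borel_measurable (M \<Otimes>\<^sub>M PiM {..<p} (\<lambda>_. unif_sphere n))"
proof -
  let ?P = "PiM {..<p} (\<lambda>_. unif_sphere n)"
  have "(\<lambda>x. x j (i ! j)) \<in> borel_measurable ?P" if "i \<in> tidx p n" "j < p" for i j
  proof -
    have "(\<lambda>v. v j) \<in> ?P \<rightarrow>\<^sub>M unif_sphere n"
      using that by (intro measurable_component_singleton) simp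
    moreover have "(\<lambda>w. w (i ! j)) \<in> borel_measurable (unif_sphere n)"
      using component_measurable_Rn[OF tidx_nth_less[OF that]]
      by (simp add: measurable_cong_sets[OF sets_unif_sphere refl])
    ultimately show ?thesis
      by (rule measurable_compose)
  qed
  then show ?thesis
    unfolding multilin_def using Z by measurable
qed

lemma sets_PiE_ball_n [measurable]:
  "PiE {..<p::nat} (\<lambda>_. ball_n n) \<in> sets (PiM {..<p} (\<lambda>_. unif_sphere n))"
  by (intro sets_PiM_I_finite) auto

lemma exp_multilin_integral_measurable:
  assumes n: "n \<ge> 1" and Z: "\<And>i. i \<in> tidx p n \<Longrightarrow> (\<lambda>\<omega>. Z \<omega> i) \<in> borel_measurable M"
  shows "(\<lambda>\<omega>. exp_multilin_integral p n (Z \<omega>) a) \<in> borel_measurable M"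
proof -
  interpret P: prob_space "PiM {..<p} (\<lambda>_. unif_sphere n)"
    using prob_space_unif_sphere[OF n] by (rule prob_space_PiM)
  note multilin_measurable_pair[OF Z, measurable]
  have "(\<lambda>x. ennreal (exp (a * multilin p n (Z (fst x)) (snd x))) * indicator (PiE {..<p} (\<lambda>_. ball_n n)) (snd x))
      \<in> borel_measurable (M \<Otimes>\<^sub>M PiM {..<p} (\<lambda>_. unif_sphere n))"
    by measurable
  then show ?thesis
    unfolding exp_multilin_integral_def using P.borel_measurable_nn_integral by (simp add: split_beta')
qed

lemma (in prob_space) nn_integral_exp_multilin_integral_le:
  assumes n: "n \<ge> 1"
    and indep: "indep_vars (\<lambda>_. borel) (\<lambda>i \<omega>. Z \<omega> i) (tidx p n)"
    and gauss: "\<And>i. i \<in> tidx p n \<Longrightarrow> distributed M lborel (\<lambda>\<omega>. Z \<omega> i) (\<lambda>x. ennreal (std_normal_density x))"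
  shows "(\<integral>\<^sup>+\<omega>. exp_multilin_integral p n (Z \<omega>) a \<partial>M) \<le> ennreal (exp (a\<^sup>2 / 2))"
proof -
  let ?P = "PiM {..<p} (\<lambda>_. unif_sphere n)"
  let ?Q = "PiE {..<p} (\<lambda>_. ball_n n)"
  interpret P: prob_space ?P
    using prob_space_unif_sphere[OF n] by (rule prob_space_PiM)
  interpret MP: pair_sigma_finite M ?P ..
  have Z: "(\<lambda>\<omega>. Z \<omega> i) \<in> borel_measurable M" if "i \<in> tidx p n" for i
    using distributed_measurable[OF gauss[OF that]] by simp
  note multilin_measurable_pair[OF Z, measurable]
  have "(\<integral>\<^sup>+\<omega>. exp_multilin_integral p n (Z \<omega>) a \<partial>M)
      = (\<integral>\<^sup>+v. (\<integral>\<^sup>+\<omega>. ennreal (exp (a * multilin p n (Z \<omega>) v)) * indicator ?Q v \<partial>M) \<partial>?P)"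
    unfolding exp_multilin_integral_def by (rule MP.Fubini'[symmetric]) (simp add: split_beta')
  also have "\<dots> = (\<integral>\<^sup>+v. ennreal (exp (a\<^sup>2 / 2 * (\<Prod>j<p. inner_n n (v j) (v j)))) * indicator ?Q v \<partial>?P)"
  proof (intro nn_integral_cong)
    fix v
    have "(\<lambda>\<omega>. multilin p n (Z \<omega>) v) \<in> borel_measurable M"
      unfolding multilin_def using Z by measurable
    then show "(\<integral>\<^sup>+\<omega>. ennreal (exp (a * multilin p n (Z \<omega>) v)) * indicator ?Q v \<partial>M)
      = ennreal (exp (a\<^sup>2 / 2 * (\<Prod>j<p. inner_n n (v j) (v j)))) * indicator ?Q v"
      by (subst nn_integral_multc) (simp_all add: nn_integral_exp_multilin[OF indep gauss])
  qed
  also have "\<dots> \<le> (\<integral>\<^sup>+v. ennreal (exp (a\<^sup>2 / 2)) \<partial>?P)"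
  proof (intro nn_integral_mono)
    fix v
    have "(\<Prod>j<p. inner_n n (v j) (v j)) \<le> 1" if "v \<in> ?Q"
      using that by (intro prod_le_1) (auto simp: ball_n_def inner_n_nonneg)
    then show "ennreal (exp (a\<^sup>2 / 2 * (\<Prod>j<p. inner_n n (v j) (v j)))) * indicator ?Q v \<le> ennreal (exp (a\<^sup>2 / 2))"
      by (cases "v \<in> ?Q") (simp_all add: mult_left_le)
  qed
  also have "\<dots> = ennreal (exp (a\<^sup>2 / 2))"
    by (simp add: P.emeasure_space_1)
  finally show ?thesis .
qed

definition inj_norm_const :: "nat \<Rightarrow> real" where
  "inj_norm_const p = 2 * (1 + real p * ln (32 * (real p)\<^sup>2))"

lemma inj_norm_const_nonneg:
  assumes "p \<ge> 1"
  shows "0 \<le> inj_norm_const p"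
proof -
  have "1 \<le> (real p)\<^sup>2"
    using assms by simp
  then show ?thesis
    by (simp add: inj_norm_const_def)
qed

lemma (in prob_space) emeasure_exp_multilin_integral_ge_le:
  assumes n: "n \<ge> 1"
    and indep: "indep_vars (\<lambda>_. borel) (\<lambda>i \<omega>. Z \<omega> i) (tidx p n)"
    and gauss: "\<And>i. i \<in> tidx p n \<Longrightarrow> distributed M lborel (\<lambda>\<omega>. Z \<omega> i) (\<lambda>x. ennreal (std_normal_density x))"
  shows "emeasure M {\<omega> \<in> space M. ennreal (exp (real n)) \<le> exp_multilin_integral p n (Z \<omega>) (sqrt (real n))}
    \<le> ennreal (exp (- real n / 2))"
proof -
  define X where "X \<omega> = exp_multilin_integral p n (Z \<omega>) (sqrt (real n))" for \<omega>
  define c where "c = ennreal (exp (- real n))"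
  have [measurable]: "X \<in> borel_measurable M"
    unfolding X_def using distributed_measurable[OF gauss] by (intro exp_multilin_integral_measurable n) simp
  have "c * ennreal (exp (real n)) = 1"
    by (simp add: c_def ennreal_mult[symmetric] exp_add[symmetric])
  then have "{\<omega> \<in> space M. ennreal (exp (real n)) \<le> X \<omega>} \<subseteq> {\<omega> \<in> space M. 1 \<le> c * X \<omega>}"
    by (auto intro: order_trans[OF eq_refl mult_left_mono])
  then have "emeasure M {\<omega> \<in> space M. ennreal (exp (real n)) \<le> X \<omega>} \<le> emeasure M {\<omega> \<in> space M. 1 \<le> c * X \<omega>}"
    by (intro emeasure_mono) measurable
  also have "\<dots> \<le> c * (\<integral>\<^sup>+\<omega>. X \<omega> \<partial>M)"
    using nn_integral_Markov_inequality[of X "space M" M c] by (simp add: nn_set_integral_space)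
  also have "\<dots> \<le> c * ennreal (exp (real n / 2))"
    unfolding X_def using nn_integral_exp_multilin_integral_le[OF n indep gauss, of "sqrt (real n)"]
    by (intro mult_left_mono) simp_all
  also have "\<dots> = ennreal (exp (- real n / 2))"
    by (simp add: c_def ennreal_mult[symmetric] exp_add[symmetric])
  finally show ?thesis
    by (simp add: X_def)
qed

text \<open>Borel--Cantelli, with the exceptional events \<open>exp_multilin_integral \<ge> e^n\<close> at \<open>a = \<surd>n\<close>.\<close>

lemma (in prob_space) AE_eventually_inj_norm_le:
  assumes p: "p \<ge> 1"
    and indep: "\<And>n. n \<ge> 1 \<Longrightarrow> indep_vars (\<lambda>_. borel) (\<lambda>i \<omega>. Z n \<omega> i) (tidx p n)"
    and gauss: "\<And>n i. n \<ge> 1 \<Longrightarrow> i \<in> tidx p n \<Longrightarrow>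
        distributed M lborel (\<lambda>\<omega>. Z n \<omega> i) (\<lambda>x. ennreal (std_normal_density x))"
  shows "AE \<omega> in M. eventually (\<lambda>n. inj_norm p n (Z n \<omega>) \<le> inj_norm_const p * sqrt (real n)) sequentially"
proof -
  define E where "E n = (if n = 0 then {}
    else {\<omega> \<in> space M. ennreal (exp (real n)) \<le> exp_multilin_integral p n (Z n \<omega>) (sqrt (real n))})" for n
  have E_sets: "E n \<in> sets M" for n
  proof (cases "n = 0")
    case False
    then have [measurable]: "(\<lambda>\<omega>. exp_multilin_integral p n (Z n \<omega>) (sqrt (real n))) \<in> borel_measurable M"
      using distributed_measurable[OF gauss] by (intro exp_multilin_integral_measurable) simp_all
    have "{\<omega> \<in> space M. ennreal (exp (real n)) \<le> exp_multilin_integral p n (Z n \<omega>) (sqrt (real n))} \<in> sets M"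
      by measurable
    then show ?thesis
      using False by (simp add: E_def)
  qed (simp add: E_def)
  have "measure M (E n) \<le> exp (- 1 / 2) ^ n" for n
    using emeasure_exp_multilin_integral_ge_le[OF _ indep gauss, of n]
    by (cases "n = 0") (simp_all add: E_def emeasure_eq_measure exp_of_nat_mult[symmetric])
  then have "summable (\<lambda>n. measure M (E n))"
    by (intro summable_comparison_test[OF _ summable_geometric]) auto
  then have "AE \<omega> in M. eventually (\<lambda>n. \<omega> \<in> space M - E n) sequentially"
    by (intro borel_cantelli_AE1 E_sets) (simp_all add: emeasure_eq_measure)
  then show ?thesis
  proof (rule AE_mp, intro AE_I2 impI)
    fix \<omega>
    assume "eventually (\<lambda>n. \<omega> \<in> space M - E n) sequentially"
    then show "eventually (\<lambda>n. inj_norm p n (Z n \<omega>) \<le> inj_norm_const p * sqrt (real n)) sequentially"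
      using eventually_ge_at_top[of 1]
    proof eventually_elim
      case (elim n)
      then have n: "n \<ge> 1" and "exp_multilin_integral p n (Z n \<omega>) (sqrt (real n)) \<le> ennreal (exp (real n))"
        by (auto simp: E_def)
      then have "inj_norm p n (Z n \<omega>) \<le> 2 * (real n + real (p * n) * ln (32 * (real p)\<^sup>2)) / sqrt (real n)"
        using inj_norm_le_of_exp_integral_le[OF n p, of "sqrt (real n)" "exp (real n)"] by simp
      also have "\<dots> = inj_norm_const p * (real n / sqrt (real n))"
        by (simp add: inj_norm_const_def algebra_simps add_divide_distrib)
      finally show ?case
        by (simp add: real_div_sqrt)
    qed
  qed
qed

section \<open>Bounds on the posterior\<close>

lemma measure_mult_le_set_integral:
  fixes f :: "'a \<Rightarrow> real"
  assumes f: "set_integrable M A f" and B: "B \<in> sets M" "B \<subseteq> A" "emeasure M B \<noteq> \<infinity>"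
    and nonneg: "\<And>x. x \<in> A \<Longrightarrow> 0 \<le> f x" and lower: "\<And>x. x \<in> B \<Longrightarrow> c \<le> f x"
  shows "c * measure M B \<le> (LINT x:A|M. f x)"
proof -
  have "c * measure M B = (LINT x|M. indicator B x * c)"
    using B by (simp add: mult.commute)
  also have "\<dots> \<le> (LINT x:A|M. f x)"
    unfolding set_lebesgue_integral_def
  proof (rule integral_mono)
    show "integrable M (\<lambda>x. indicator B x * c)"
      using B by (simp add: less_top)
    show "integrable M (\<lambda>x. indicator A x *\<^sub>R f x)"
      using f by (simp add: set_integrable_def)
    show "indicator B x * c \<le> indicator A x *\<^sub>R f x" for x
      using B(2) nonneg lower by (auto split: split_indicator)
  qed
  finally show ?thesis .
qed

lemma (in prob_space) set_integral_le_const: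
  fixes f :: "'a \<Rightarrow> real"
  assumes f: "set_integrable M A f" and "0 \<le> U" and "\<And>x. x \<in> A \<Longrightarrow> f x \<le> U"
  shows "(LINT x:A|M. f x) \<le> U"
proof -
  have "(LINT x:A|M. f x) \<le> (LINT x|M. U)"
    unfolding set_lebesgue_integral_def
    using f assms(2,3) by (intro integral_mono) (auto simp: set_integrable_def split: split_indicator)
  then show ?thesis
    by (simp add: prob_space)
qed

lemma overlap_measurable [measurable]: "(\<lambda>x. overlap p n \<theta>0 x) \<in> borel_measurable (Rn n)"
  unfolding overlap_def by (cases "even p") simp_all

lemma setS_sets [measurable]: "setS p n \<theta>0 s \<in> sets (Rn n)"
proof -
  have "setS p n \<theta>0 s = {x \<in> PiE {..<n} (\<lambda>_. UNIV). inner_n n x x = 1 \<and> overlap p n \<theta>0 x \<le> s}"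
    by (auto simp: setS_def sphere_n_def)
  also have "\<dots> \<in> sets (Rn n)"
    by (rule sets_Rn_Collect) measurable
  finally show ?thesis .
qed

lemma setT_sets [measurable]: "setT p n \<theta>0 t \<in> sets (Rn n)"
proof -
  have "setT p n \<theta>0 t = {x \<in> PiE {..<n} (\<lambda>_. UNIV). inner_n n x x = 1 \<and> t < overlap p n \<theta>0 x}"
    by (auto simp: setT_def sphere_n_def)
  also have "\<dots> \<in> sets (Rn n)"
    by (rule sets_Rn_Collect) measurable
  finally show ?thesis .
qed

lemma power_inner_le_of_overlap_le:
  assumes "overlap p n \<theta>0 \<theta> \<le> s" "0 \<le> s"
  shows "(inner_n n \<theta> \<theta>0)^p \<le> s^p"
proof (cases "even p")
  case True
  then have "\<bar>inner_n n \<theta> \<theta>0\<bar>^p \<le> s^p"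
    using assms by (intro power_mono) (simp_all add: overlap_def)
  then show ?thesis
    using True by (simp add: power_even_abs)
next
  case False
  then have m: "inner_n n \<theta> \<theta>0 \<le> s"
    using assms by (simp add: overlap_def)
  show ?thesis
  proof (cases "inner_n n \<theta> \<theta>0 \<ge> 0")
    case True
    then show ?thesis
      using m by (intro power_mono) auto
  next
    case neg: False
    then have "(inner_n n \<theta> \<theta>0)^p < 0"
      using False by (simp add: power_less_zero_eq)
    then show ?thesis
      using assms(2) zero_le_power[of s p] by linarith
  qed
qed

lemma power_inner_ge_of_overlap_gt:
  assumes "t < overlap p n \<theta>0 \<theta>" "0 \<le> t"
  shows "t^p \<le> (inner_n n \<theta> \<theta>0)^p"
proof (cases "even p")
  case True
  then have "t^p \<le> \<bar>inner_n n \<theta> \<theta>0\<bar>^p"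
    using assms by (intro power_mono) (simp_all add: overlap_def)
  then show ?thesis
    using True by (simp add: power_even_abs)
next
  case False
  then show ?thesis
    using assms by (intro power_mono) (simp_all add: overlap_def)
qed

lemma cap_orthogonal_subset_setS:
  assumes \<theta>0: "\<theta>0 \<in> sphere_n n" and w: "w \<in> sphere_n n" "inner_n n w \<theta>0 = 0" and s: "0 < s"
  shows "cap n (1 - s\<^sup>2 / 2) w \<subseteq> setS p n \<theta>0 s"
proof
  fix \<theta>
  assume "\<theta> \<in> cap n (1 - s\<^sup>2 / 2) w"
  then have \<theta>: "\<theta> \<in> sphere_n n" "1 - s\<^sup>2 / 2 < inner_n n \<theta> w"
    by (auto simp: cap_def)
  have "(norm_n n (\<lambda>i. \<theta> i - w i))\<^sup>2 < s\<^sup>2"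
    using norm_n_diff_sphere[OF \<theta>(1) w(1)] \<theta>(2) by simp
  then have "norm_n n (\<lambda>i. \<theta> i - w i) < s"
    using s by (simp add: power_less_imp_less_base)
  moreover have "inner_n n \<theta> \<theta>0 = inner_n n (\<lambda>i. \<theta> i - w i) \<theta>0"
    by (simp add: inner_n_diff_left w(2))
  ultimately have "\<bar>inner_n n \<theta> \<theta>0\<bar> \<le> s"
    using abs_inner_n_le[of n "\<lambda>i. \<theta> i - w i" \<theta>0] norm_n_sphere[OF \<theta>0] by simp
  then show "\<theta> \<in> setS p n \<theta>0 s"
    using \<theta>(1) by (auto simp: setS_def overlap_def)
qed

lemma cap_subset_setT: "cap n t \<theta>0 \<subseteq> setT p n \<theta>0 t"
  by (auto simp: cap_def setT_def overlap_def)

definition post_density :: "nat \<Rightarrow> nat \<Rightarrow> real \<Rightarrow> (nat list \<Rightarrow> real) \<Rightarrow> (nat \<Rightarrow> real) \<Rightarrow> real" where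
  "post_density p n lam Y \<theta> = exp (1/2 * sqrt (real n) * lam * tinner p n (tpow p \<theta>) Y)"

lemma posterior_eq: "posterior p n lam Y B = (LINT \<theta>:B|unif_sphere n. post_density p n lam Y \<theta>) /
    (LINT \<theta>|unif_sphere n. post_density p n lam Y \<theta>)"
  by (simp add: posterior_def post_density_def)

lemma post_density_measurable [measurable]: "post_density p n lam Y \<in> borel_measurable (Rn n)"
proof -
  have "(\<lambda>\<theta>. \<theta> (i ! j)) \<in> borel_measurable (Rn n)" if "i \<in> tidx p n" "j < p" for i j
    using that by (simp add: tidx_nth_less)
  then show ?thesis
    unfolding post_density_def tinner_def tpow_def by measurable
qed

lemma post_density_obsY:
  "post_density p n lam (obsY p n lam \<theta>0 A) \<theta> =
     exp (real n * lam\<^sup>2 / 2 * (inner_n n \<theta> \<theta>0)^p + sqrt (real n) * lam / 2 * multilin p n A (\<lambda>_. \<theta>))"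
proof -
  have "sqrt (real n) * sqrt (real n) = real n"
    by simp
  then show ?thesis
    unfolding post_density_def tinner_tpow_obsY by (simp add: algebra_simps power2_eq_square)
qed

context
  fixes p n :: nat and lam :: real and \<theta>0 :: "nat \<Rightarrow> real" and A :: "nat list \<Rightarrow> real"
  assumes n: "n \<ge> 1" and lam: "0 \<le> lam" and \<theta>0: "\<theta>0 \<in> sphere_n n"
begin

lemma post_density_obsY_bounds:
  assumes \<theta>: "inner_n n \<theta> \<theta> \<le> 1"
  shows "exp (real n * lam\<^sup>2 / 2 * (inner_n n \<theta> \<theta>0)^p - sqrt (real n) * lam / 2 * inj_norm p n A)
      \<le> post_density p n lam (obsY p n lam \<theta>0 A) \<theta>" (is ?lower)
    and "post_density p n lam (obsY p n lam \<theta>0 A) \<theta>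
      \<le> exp (real n * lam\<^sup>2 / 2 * (inner_n n \<theta> \<theta>0)^p + sqrt (real n) * lam / 2 * inj_norm p n A)" (is ?upper)
proof -
  have "\<bar>sqrt (real n) * lam / 2 * multilin p n A (\<lambda>_. \<theta>)\<bar> \<le> sqrt (real n) * lam / 2 * inj_norm p n A"
    using abs_multilin_diag_le_inj_norm[OF n \<theta>] lam by (simp add: abs_mult mult_left_mono)
  then show ?lower ?upper
    unfolding post_density_obsY by (simp_all add: abs_le_iff)
qed

lemma abs_power_inner_le_1:
  assumes "inner_n n \<theta> \<theta> \<le> 1"
  shows "\<bar>(inner_n n \<theta> \<theta>0)^p\<bar> \<le> 1"
proof -
  have "\<bar>inner_n n \<theta> \<theta>0\<bar> \<le> 1"
    using abs_inner_n_le[of n \<theta> \<theta>0] norm_n_sphere[OF \<theta>0] assms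
    by (simp add: norm_n_def) (smt (verit) real_sqrt_le_1_iff)
  then show ?thesis
    by (simp add: power_abs power_le_one)
qed

lemma integrable_post_density_obsY: "integrable (unif_sphere n) (post_density p n lam (obsY p n lam \<theta>0 A))"
proof -
  interpret prob_space "unif_sphere n"
    using prob_space_unif_sphere[OF n] .
  have bound: "post_density p n lam (obsY p n lam \<theta>0 A) \<theta> \<le> exp (real n * lam\<^sup>2 / 2 + sqrt (real n) * lam / 2 * inj_norm p n A)"
    if "inner_n n \<theta> \<theta> \<le> 1" for \<theta>
  proof -
    have "real n * lam\<^sup>2 / 2 * (inner_n n \<theta> \<theta>0)^p \<le> real n * lam\<^sup>2 / 2"
      using abs_power_inner_le_1[OF that] by (intro mult_left_le) auto
    then show ?thesis
      using post_density_obsY_bounds(2)[OF that] by (smt (verit) exp_le_cancel_iff)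
  qed
  have "AE \<theta> in unif_sphere n. norm (post_density p n lam (obsY p n lam \<theta>0 A) \<theta>)
      \<le> exp (real n * lam\<^sup>2 / 2 + sqrt (real n) * lam / 2 * inj_norm p n A)"
    using AE_unif_sphere_in_ball[of n] by eventually_elim (use bound in \<open>simp add: post_density_def\<close>)
  then show ?thesis
    by (rule integrable_const_bound) simp
qed

lemma set_integrable_post_density_obsY:
  "B \<in> sets (Rn n) \<Longrightarrow> set_integrable (unif_sphere n) B (post_density p n lam (obsY p n lam \<theta>0 A))"
  unfolding set_integrable_def by (rule integrable_mult_indicator) (simp_all add: integrable_post_density_obsY)

lemma set_integral_setS_post_density_le:
  assumes s: "0 \<le> s"
  shows "(LINT \<theta>:setS p n \<theta>0 s|unif_sphere n. post_density p n lam (obsY p n lam \<theta>0 A) \<theta>)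
    \<le> exp (real n * lam\<^sup>2 / 2 * s^p + sqrt (real n) * lam / 2 * inj_norm p n A)"
proof -
  interpret prob_space "unif_sphere n"
    using prob_space_unif_sphere[OF n] .
  show ?thesis
  proof (rule set_integral_le_const[OF set_integrable_post_density_obsY])
    fix \<theta>
    assume "\<theta> \<in> setS p n \<theta>0 s"
    then have \<theta>: "inner_n n \<theta> \<theta> = 1" "(inner_n n \<theta> \<theta>0)^p \<le> s^p"
      using power_inner_le_of_overlap_le s by (auto simp: setS_def sphere_n_def)
    have "real n * lam\<^sup>2 / 2 * (inner_n n \<theta> \<theta>0)^p \<le> real n * lam\<^sup>2 / 2 * s^p"
      using \<theta>(2) by (intro mult_left_mono) auto
    then show "post_density p n lam (obsY p n lam \<theta>0 A) \<theta>
        \<le> exp (real n * lam\<^sup>2 / 2 * s^p + sqrt (real n) * lam / 2 * inj_norm p n A)"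
      using post_density_obsY_bounds(2)[of \<theta>] \<theta>(1) by (smt (verit) exp_le_cancel_iff)
  qed simp_all
qed

lemma set_integral_setT_post_density_ge:
  assumes t: "0 \<le> t" "t < 1"
  shows "exp (real n * lam\<^sup>2 / 2 * t^p - sqrt (real n) * lam / 2 * inj_norm p n A) * ((1 - t) / 4)^n
    \<le> (LINT \<theta>:setT p n \<theta>0 t|unif_sphere n. post_density p n lam (obsY p n lam \<theta>0 A) \<theta>)"
proof -
  interpret prob_space "unif_sphere n"
    using prob_space_unif_sphere[OF n] .
  have "1 - 4 * ((1 - t) / 4) = t"
    by (simp add: field_simps)
  then have "((1 - t) / 4)^n \<le> measure (unif_sphere n) (cap n t \<theta>0)"
    using emeasure_cap_ge[OF n \<theta>0, of "(1 - t) / 4"] t by (simp add: emeasure_eq_measure)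
  then have "exp (real n * lam\<^sup>2 / 2 * t^p - sqrt (real n) * lam / 2 * inj_norm p n A) * ((1 - t) / 4)^n
      \<le> exp (real n * lam\<^sup>2 / 2 * t^p - sqrt (real n) * lam / 2 * inj_norm p n A) * measure (unif_sphere n) (cap n t \<theta>0)"
    by (intro mult_left_mono) auto
  also have "\<dots> \<le> (LINT \<theta>:setT p n \<theta>0 t|unif_sphere n. post_density p n lam (obsY p n lam \<theta>0 A) \<theta>)"
  proof (rule measure_mult_le_set_integral[OF set_integrable_post_density_obsY])
    fix \<theta>
    assume "\<theta> \<in> cap n t \<theta>0"
    then have "\<theta> \<in> setT p n \<theta>0 t"
      using cap_subset_setT by blast
    then have \<theta>: "inner_n n \<theta> \<theta> = 1" "t < overlap p n \<theta>0 \<theta>"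
      by (auto simp: setT_def sphere_n_def)
    have "real n * lam\<^sup>2 / 2 * t^p \<le> real n * lam\<^sup>2 / 2 * (inner_n n \<theta> \<theta>0)^p"
      using power_inner_ge_of_overlap_gt[OF \<theta>(2) t(1)] by (intro mult_left_mono) auto
    then show "exp (real n * lam\<^sup>2 / 2 * t^p - sqrt (real n) * lam / 2 * inj_norm p n A)
        \<le> post_density p n lam (obsY p n lam \<theta>0 A) \<theta>"
      using post_density_obsY_bounds(1)[of \<theta>] \<theta>(1) by (smt (verit) exp_le_cancel_iff)
  qed (simp_all add: cap_subset_setT emeasure_finite post_density_def)
  finally show ?thesis .
qed

text \<open>Needed because \<open>ln 0 = 0\<close>: an empty numerator would not make the log-ratio negative.\<close>

lemma set_integral_setS_post_density_pos:
  assumes n2: "n \<ge> 2" and s: "0 < s" "s \<le> 1"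
  shows "0 < (LINT \<theta>:setS p n \<theta>0 s|unif_sphere n. post_density p n lam (obsY p n lam \<theta>0 A) \<theta>)"
proof -
  interpret prob_space "unif_sphere n"
    using prob_space_unif_sphere[OF n] .
  obtain w where w: "w \<in> sphere_n n" "inner_n n w \<theta>0 = 0"
    using exists_orthogonal_unit[OF n2 \<theta>0] by blast
  define c where "c = exp (- (real n * lam\<^sup>2 / 2) - sqrt (real n) * lam / 2 * inj_norm p n A)"
  have "0 < c * (s\<^sup>2 / 8)^n"
    using s(1) by (simp add: c_def)
  also have "\<dots> \<le> c * measure (unif_sphere n) (cap n (1 - s\<^sup>2 / 2) w)"
  proof -
    have "s\<^sup>2 \<le> 1"
      using s by (simp add: power_le_one)
    then have "(s\<^sup>2 / 8)^n \<le> measure (unif_sphere n) (cap n (1 - 4 * (s\<^sup>2 / 8)) w)"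
      using emeasure_cap_ge[OF n w(1), of "s\<^sup>2 / 8"] s(1) by (simp add: emeasure_eq_measure)
    then show ?thesis
      by (intro mult_left_mono) (simp_all add: c_def)
  qed
  also have "\<dots> \<le> (LINT \<theta>:setS p n \<theta>0 s|unif_sphere n. post_density p n lam (obsY p n lam \<theta>0 A) \<theta>)"
  proof (rule measure_mult_le_set_integral[OF set_integrable_post_density_obsY])
    fix \<theta>
    assume "\<theta> \<in> cap n (1 - s\<^sup>2 / 2) w"
    then have \<theta>: "inner_n n \<theta> \<theta> = 1"
      by (simp add: cap_def sphere_n_def)
    have "- (real n * lam\<^sup>2 / 2) \<le> real n * lam\<^sup>2 / 2 * (inner_n n \<theta> \<theta>0)^p"
      using abs_power_inner_le_1[of \<theta>] \<theta> mult_left_mono[of "-1" "(inner_n n \<theta> \<theta>0)^p" "real n * lam\<^sup>2 / 2"]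
      by (simp add: abs_le_iff)
    then show "c \<le> post_density p n lam (obsY p n lam \<theta>0 A) \<theta>"
      using post_density_obsY_bounds(1)[of \<theta>] \<theta> unfolding c_def by (smt (verit) exp_le_cancel_iff)
  qed (use cap_orthogonal_subset_setS[OF \<theta>0 w s(1)] in \<open>simp_all add: emeasure_finite post_density_def\<close>)
  finally show ?thesis .
qed

lemma ln_posterior_ratio_le:
  assumes n2: "n \<ge> 2" and st: "0 < s" "s < t" "t < 1"
  shows "ln (posterior p n lam (obsY p n lam \<theta>0 A) (setS p n \<theta>0 s) /
      posterior p n lam (obsY p n lam \<theta>0 A) (setT p n \<theta>0 t))
    \<le> real n * (lam\<^sup>2 / 2 * (s^p - t^p) + ln (4 / (1 - t))) + sqrt (real n) * lam * inj_norm p n A"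
proof -
  interpret prob_space "unif_sphere n"
    using prob_space_unif_sphere[OF n] .
  define f where "f = post_density p n lam (obsY p n lam \<theta>0 A)"
  define q where "q = real n * lam\<^sup>2 / 2"
  define c where "c = sqrt (real n) * lam / 2 * inj_norm p n A"
  define \<rho> where "\<rho> = (1 - t) / 4"
  define N where "N = (LINT \<theta>:setS p n \<theta>0 s|unif_sphere n. f \<theta>)"
  define T where "T = (LINT \<theta>:setT p n \<theta>0 t|unif_sphere n. f \<theta>)"
  define D where "D = (LINT \<theta>|unif_sphere n. f \<theta>)"
  have \<rho>: "0 < \<rho>"
    using st by (simp add: \<rho>_def)
  have N: "0 < N" "N \<le> exp (q * s^p + c)"
    using set_integral_setS_post_density_pos[OF n2 st(1)] set_integral_setS_post_density_le[of s] st
    by (simp_all add: N_def f_def q_def c_def)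
  have T: "exp (q * t^p - c) * \<rho>^n \<le> T"
    using set_integral_setT_post_density_ge[of t] st by (simp add: T_def f_def q_def c_def \<rho>_def)
  then have T_pos: "0 < T"
    using \<rho> by (smt (verit) exp_gt_zero mult_pos_pos zero_less_power)
  have "T \<le> D"
    unfolding T_def D_def set_lebesgue_integral_def
    using set_integrable_post_density_obsY[of "setT p n \<theta>0 t"] integrable_post_density_obsY
    by (intro integral_mono) (auto simp: f_def set_integrable_def post_density_def split: split_indicator)
  then have ratio: "posterior p n lam (obsY p n lam \<theta>0 A) (setS p n \<theta>0 s) /
      posterior p n lam (obsY p n lam \<theta>0 A) (setT p n \<theta>0 t) = N / T"
    using T_pos by (simp add: posterior_eq N_def T_def D_def f_def)
  have "ln (N / T) \<le> ln (exp (q * s^p + c) / (exp (q * t^p - c) * \<rho>^n))"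
    using N T T_pos \<rho> by (subst ln_le_cancel_iff) (auto intro!: frac_le)
  also have "\<dots> = real n * (lam\<^sup>2 / 2 * (s^p - t^p) - ln \<rho>) + 2 * c"
    using \<rho> by (simp add: ln_div ln_mult ln_realpow q_def field_simps)
  also have "ln \<rho> = - ln (4 / (1 - t))"
    using st by (simp add: \<rho>_def ln_div)
  finally show ?thesis
    by (simp add: ratio c_def)
qed

end

lemma AE_limsup_ln_posterior_ratio_le:
  fixes \<theta>0 :: "nat \<Rightarrow> nat \<Rightarrow> real" and Z :: "nat \<Rightarrow> 'a \<Rightarrow> nat list \<Rightarrow> real"
  assumes p: "p \<ge> 1" and \<theta>0: "\<And>n. n \<ge> 1 \<Longrightarrow> \<theta>0 n \<in> sphere_n n"
    and M: "prob_space M"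
    and indep: "\<And>n. n \<ge> 1 \<Longrightarrow> prob_space.indep_vars M (\<lambda>_. borel) (\<lambda>i \<omega>. Z n \<omega> i) (tidx p n)"
    and gauss: "\<And>n i. n \<ge> 1 \<Longrightarrow> i \<in> tidx p n \<Longrightarrow>
        distributed M lborel (\<lambda>\<omega>. Z n \<omega> i) (\<lambda>x. ennreal (std_normal_density x))"
    and lam: "0 \<le> lam" and st: "0 < s" "s < t" "t < 1"
    and B: "lam\<^sup>2 / 2 * (s^p - t^p) + ln (4 / (1 - t)) + lam * inj_norm_const p \<le> B"
  shows "AE \<omega> in M.
    limsup (\<lambda>n. ereal (1 / real n * ln
      (posterior p n lam (obsY p n lam (\<theta>0 n) (Z n \<omega>)) (setS p n (\<theta>0 n) s) /
       posterior p n lam (obsY p n lam (\<theta>0 n) (Z n \<omega>)) (setT p n (\<theta>0 n) t))))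
    \<le> ereal B"
proof -
  interpret prob_space M
    by (rule M)
  have "AE \<omega> in M. eventually (\<lambda>n. inj_norm p n (Z n \<omega>) \<le> inj_norm_const p * sqrt (real n)) sequentially"
    using p indep gauss by (rule AE_eventually_inj_norm_le)
  then show ?thesis
  proof (rule AE_mp, intro AE_I2 impI Limsup_bounded)
    fix \<omega>
    assume "eventually (\<lambda>n. inj_norm p n (Z n \<omega>) \<le> inj_norm_const p * sqrt (real n)) sequentially"
    then show "eventually (\<lambda>n. ereal (1 / real n * ln
      (posterior p n lam (obsY p n lam (\<theta>0 n) (Z n \<omega>)) (setS p n (\<theta>0 n) s) /
       posterior p n lam (obsY p n lam (\<theta>0 n) (Z n \<omega>)) (setT p n (\<theta>0 n) t)))
      \<le> ereal B) sequentially"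
      using eventually_ge_at_top[of 2]
    proof eventually_elim
      case (elim n)
      define r where "r = posterior p n lam (obsY p n lam (\<theta>0 n) (Z n \<omega>)) (setS p n (\<theta>0 n) s) /
        posterior p n lam (obsY p n lam (\<theta>0 n) (Z n \<omega>)) (setT p n (\<theta>0 n) t)"
      have "sqrt (real n) * lam * inj_norm p n (Z n \<omega>) \<le> sqrt (real n) * lam * (inj_norm_const p * sqrt (real n))"
        using elim lam by (intro mult_left_mono) auto
      also have "\<dots> = real n * (lam * inj_norm_const p)"
        by (simp add: algebra_simps)
      finally have "ln r \<le> real n * (lam\<^sup>2 / 2 * (s^p - t^p) + ln (4 / (1 - t)) + lam * inj_norm_const p)"
        using ln_posterior_ratio_le[of n lam "\<theta>0 n" s t p "Z n \<omega>"] elim lam st \<theta>0[of n]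
        unfolding r_def distrib_left by linarith
      also have "\<dots> \<le> real n * B"
        using B by (intro mult_left_mono) auto
      finally show ?case
        using elim by (simp add: r_def field_simps)
    qed
  qed
qed

section \<open>Choice of the thresholds\<close>

definition gap :: "real \<Rightarrow> real" where
  "gap lam = 1 / sqrt (max lam 0 + 1)"

lemma gap_pos: "0 < gap lam" and gap_le_1: "gap lam \<le> 1"
  by (auto simp: gap_def)

lemma tendsto_gap: "(gap \<longlongrightarrow> 0) at_top"
proof -
  have "((\<lambda>x::real. 1 / sqrt (x + 1)) \<longlongrightarrow> 0) at_top"
    by real_asymp
  moreover have "eventually (\<lambda>x. 1 / sqrt (x + 1) = gap x) at_top"
    using eventually_ge_at_top[of "0::real"] by eventually_elim (simp add: gap_def)
  ultimately show ?thesis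
    by (rule Lim_transform_eventually)
qed

lemma quartic_over_linear_dominates:
  fixes C K y l :: real
  assumes C: "C \<ge> 0" and K: "K > 0" and y: "y \<ge> 16 * (C + 2 + K + \<bar>l\<bar>)"
  shows "- ((y\<^sup>2 - 1)\<^sup>2 / (4 * y)) + y\<^sup>2 * C + (l + ln y) \<le> - K"
proof -
  define Q where "Q = C + 2 + K + \<bar>l\<bar>"
  have y32: "y \<ge> 32" and yQ: "y / 16 \<ge> Q"
    using y C K by (simp_all add: Q_def)
  have y2: "y\<^sup>2 \<ge> y"
    using y32 by (simp add: power2_eq_square)
  have "(y\<^sup>2 / 2)\<^sup>2 \<le> (y\<^sup>2 - 1)\<^sup>2"
    using y2 y32 by (intro power_mono) auto
  then have "(y\<^sup>2 / 2)\<^sup>2 / (4 * y) \<le> (y\<^sup>2 - 1)\<^sup>2 / (4 * y)"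
    using y32 by (intro divide_right_mono) auto
  moreover have "(y\<^sup>2 / 2)\<^sup>2 / (4 * y) = y\<^sup>2 * (y / 16)"
    using y32 by (simp add: power2_eq_square field_simps)
  moreover have "y\<^sup>2 * Q \<le> y\<^sup>2 * (y / 16)"
    using yQ by (intro mult_left_mono) auto
  ultimately have "y\<^sup>2 * Q \<le> (y\<^sup>2 - 1)\<^sup>2 / (4 * y)"
    by linarith
  moreover have "ln y \<le> y"
    using ln_le_minus_one[of y] y32 by linarith
  moreover have "K \<le> K * y\<^sup>2" and "l \<le> \<bar>l\<bar> * y\<^sup>2"
    using K y2 y32 mult_left_mono[of 1 "y\<^sup>2" "\<bar>l\<bar>"] by simp_all
  ultimately show ?thesis
    using y2 y32 by (simp add: Q_def algebra_simps)
qed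

lemma power_diff_le_half:
  fixes e :: real
  assumes p: "p \<ge> 1" and e: "0 < e" "e \<le> 1"
  shows "(1 - e)^p - (1 - e / (2 * real p))^p \<le> - (e / 2)"
proof -
  have "(1 - e)^p \<le> 1 - e"
    using power_decreasing[of 1 p "1 - e"] p e by simp
  moreover have "1 + real p * (- (e / (2 * real p))) \<le> (1 + (- (e / (2 * real p))))^p"
    using e p by (intro Bernoulli_inequality) (auto simp: field_simps)
  then have "1 - e / 2 \<le> (1 - e / (2 * real p))^p"
    using p by simp
  ultimately show ?thesis
    by linarith
qed

lemma threshold_bound:
  fixes C K :: real
  assumes p: "p \<ge> 1" and C: "C \<ge> 0" and K: "K > 0"
  obtains lam0 where "lam0 > 0" and "\<And>lam. lam \<ge> lam0 \<Longrightarrow>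
    lam\<^sup>2 / 2 * ((1 - gap lam)^p - (1 - gap lam / (2 * real p))^p)
      + ln (4 / (1 - (1 - gap lam / (2 * real p)))) + lam * C \<le> - K"
proof
  define Y where "Y = 16 * (C + 2 + K + \<bar>ln (8 * real p)\<bar>)"
  have Y: "Y \<ge> 32"
    using C K by (simp add: Y_def)
  then show Y2: "Y\<^sup>2 - 1 > 0"
    using one_less_power[of Y 2] by simp
  fix lam
  assume lam_ge: "lam \<ge> Y\<^sup>2 - 1"
  define y where "y = sqrt (lam + 1)"
  define e where "e = gap lam"
  have lam0: "lam \<ge> 0"
    using lam_ge Y2 by linarith
  then have lam: "lam = y\<^sup>2 - 1"
    by (simp add: y_def)
  have "sqrt (Y\<^sup>2) \<le> y"
    unfolding y_def using lam_ge by (intro real_sqrt_le_mono) linarith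
  then have y: "y \<ge> Y"
    using Y by simp
  then have y1: "y \<ge> 1"
    using Y by linarith
  have e: "e = 1 / y" "0 < e" "e \<le> 1"
    using lam0 by (simp_all add: y_def e_def gap_def gap_pos gap_le_1)
  have "lam\<^sup>2 / 2 * ((1 - e)^p - (1 - e / (2 * real p))^p) \<le> lam\<^sup>2 / 2 * (- (e / 2))"
    using power_diff_le_half[OF p e(2,3)] by (intro mult_left_mono) auto
  also have "\<dots> = - ((y\<^sup>2 - 1)\<^sup>2 / (4 * y))"
    using y1 by (simp add: lam e field_simps)
  finally have "lam\<^sup>2 / 2 * ((1 - e)^p - (1 - e / (2 * real p))^p) \<le> - ((y\<^sup>2 - 1)\<^sup>2 / (4 * y))" .
  moreover have "lam * C \<le> y\<^sup>2 * C"
    using C lam by (intro mult_right_mono) simp_all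
  moreover have "4 / (1 - (1 - e / (2 * real p))) = 8 * real p * y"
    using p y1 by (simp add: e)
  then have "ln (4 / (1 - (1 - e / (2 * real p)))) = ln (8 * real p) + ln y"
    using p y1 by (simp add: ln_mult)
  moreover have "- ((y\<^sup>2 - 1)\<^sup>2 / (4 * y)) + y\<^sup>2 * C + (ln (8 * real p) + ln y) \<le> - K"
    using y by (intro quartic_over_linear_dominates C K) (simp add: Y_def)
  ultimately show "lam\<^sup>2 / 2 * ((1 - gap lam)^p - (1 - gap lam / (2 * real p))^p)
      + ln (4 / (1 - (1 - gap lam / (2 * real p)))) + lam * C \<le> - K"
    by (simp add: e_def)
qed

theorem proposition2p3:
  fixes p :: nat
    and \<theta>0 :: "nat \<Rightarrow> nat \<Rightarrow> real"
    and M :: "'a measure"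
    and Z :: "nat \<Rightarrow> 'a \<Rightarrow> nat list \<Rightarrow> real"
  assumes p3: "p \<ge> 3"
    and theta0: "\<And>n. n \<ge> 1 \<Longrightarrow> \<theta>0 n \<in> sphere_n n"
    and prob: "prob_space M"
    and Zindep: "\<And>n. n \<ge> 1 \<Longrightarrow>
        prob_space.indep_vars M (\<lambda>_. borel) (\<lambda>i \<omega>. Z n \<omega> i) (tidx p n)"
    and Zgauss: "\<And>n i. n \<ge> 1 \<Longrightarrow> i \<in> tidx p n \<Longrightarrow>
        distributed M lborel (\<lambda>\<omega>. Z n \<omega> i) (\<lambda>x. ennreal (std_normal_density x))"
  shows "\<forall>K>0. \<exists>lam0>0. \<exists>s t :: real \<Rightarrow> real.
     (\<forall>lam. 0 \<le> s lam \<and> s lam < t lam \<and> t lam < 1) \<and>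
     (s \<longlongrightarrow> 1) at_top \<and> (t \<longlongrightarrow> 1) at_top \<and>
     (\<forall>lam\<ge>lam0. AE \<omega> in M.
        limsup (\<lambda>n. ereal (1 / real n * ln
          (posterior p n lam (obsY p n lam (\<theta>0 n) (Z n \<omega>)) (setS p n (\<theta>0 n) (s lam)) /
           posterior p n lam (obsY p n lam (\<theta>0 n) (Z n \<omega>)) (setT p n (\<theta>0 n) (t lam)))))
        \<le> ereal (- K))"
  apply (intro allI impI)
  subgoal premises K for K
  proof -
    have p: "p \<ge> 1"
      using p3 by simp
    obtain lam0 where lam0: "lam0 > 0" and bound: "\<And>lam. lam \<ge> lam0 \<Longrightarrow>
        lam\<^sup>2 / 2 * ((1 - gap lam)^p - (1 - gap lam / (2 * real p))^p)
        + ln (4 / (1 - (1 - gap lam / (2 * real p)))) + lam * inj_norm_const p \<le> - K"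
      using threshold_bound[OF p inj_norm_const_nonneg[OF p] K] by blast
    define s where "s lam = 1 - gap lam" for lam
    define t where "t lam = 1 - gap lam / (2 * real p)" for lam
    have st: "0 \<le> s lam \<and> s lam < t lam \<and> t lam < 1" for lam
      using gap_pos[of lam] gap_le_1[of lam] p by (simp add: s_def t_def field_simps)
    have "(s \<longlongrightarrow> 1) at_top" "(t \<longlongrightarrow> 1) at_top"
      unfolding s_def[abs_def] t_def[abs_def] using p by (auto intro!: tendsto_eq_intros tendsto_gap)
    moreover have "0 < s lam" if "lam \<ge> lam0" for lam
      using that lam0 by (simp add: s_def gap_def)
    ultimately show ?thesis
      using lam0 st bound
      by (intro exI[of _ lam0] exI[of _ s] exI[of _ t] conjI allI impI
          AE_limsup_ln_posterior_ratio_le[OF p theta0 prob Zindep Zgauss]) (auto simp: s_def t_def)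
  qed
  done

end
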